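(* Let $D,\Delta,\beta,N_1,N_2,p\in\mathbb N$ with $\Delta\ge2$. The number of isomorphism classes of grounded decorated landscapes of type $(D,\Delta,\beta,N_1,N_2,p)$ is at most $$C\cdot N_2^{N_1}\cdot\left(\frac{\Delta^\Delta}{(\Delta-1)^{\Delta-1}}\cdot\beta\right)^{N_2},$$ where $C$ depends only on $(D,\Delta,N_1,p)$ (and the fixed number $b$).
   Context: Fix $b\ge2$, identified with $\{0,\dots,b-1\}$. An oriented graph is a set $V$ with $E\subseteq V\times V$ (self-loops allowed). A variable graph is an oriented graph $G$ together with well-orders on $\mathrm{Var}(x)=\{y:(x,y)\in E\}$ and $\mathrm{Cl}(x)=\{y:(y,x)\in E\}$ for each $x$. $\mathrm{Rel}(G)$ is the oriented graph on $V(G)$ with edge $(x,y)$ iff $\mathrm{Var}(x)\cap\mathrm{Var}(y)\ne\emptyset$; the degree of $x$ in $\mathrm{Rel}(G)$ is the number of such $y$ (including possibly $x$). The edges out of $x$ in $\mathrm{Rel}(G)$ are labelled by distinct natural numbers according to the order: for distinct $y,z$, let $v,w$ be the least elements of $\mathrm{Var}(x)\cap\mathrm{Var}(y)$, $\mathrm{Var}(x)\cap\mathrm{Var}(z)$ in $\mathrm{Var}(x)$; $y<z$ if $v<w$, or $v=w$ and $y<z$ in $\mathrm{Cl}(v)$. $\mathrm{Canvas}(G)$ has vertex set $V(G)\times\mathbb N$ and, for every edge $(x,y)$ of $\mathrm{Rel}(G)$ and $i\in\mathbb N$, an edge $((x,i),(y,i+1))$ with the label of $(x,y)$. For $x=(\bar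 x,i)$, $\ell(x)=i$ is its level. A local rule $\mathbf R$ on $G$ assigns $\mathbf R(x)\subseteq b^{\mathrm{Var}(x)}$; $\mathbf R^c(x)=b^{\mathrm{Var}(x)}\setminus\mathbf R(x)$. A pseudo-landscape $\mathcal L$ is a triple: a variable graph $G_{\mathcal L}$, a local rule $\mathbf R_{\mathcal L}$ on it, and a subgraph $\mathrm{For}(\mathcal L)$ of $\mathrm{Canvas}(G_{\mathcal L})$ (with inherited labels) in which every vertex has in-degree $0$ or $1$; $V(\mathcal L)$ is its vertex set and $V(\mathcal L)_i$ its level-$i$ vertices. It is a landscape if for all $i$ and distinct $x,y\in V(\mathcal L)_i$ the distance between $\bar x$ and $\bar y$ in $\mathrm{Rel}(G_{\mathcal L})$ is at least $2$. It is grounded if the root (vertex of minimal level) of every connected component of $\mathrm{For}(\mathcal L)$ has level $0$. It is of type $(D,\Delta,\beta)$ if out-degrees in $G_{\mathcal L}$ are $\le D$, degrees in $\mathrm{Rel}(G_{\mathcal L})$ are $\le\Delta$, and $|\mathbf R^c_{\mathcal L}(x)|\le\beta$ for all $x$. A decoration consists of $\mathrm{Final}(\mathcal L)\in b^{V(G_{\mathcal L})}$, for each $x\in V(\mathcal L)$ an element $\mathrm{Prev}(x)\in\mathbf R^c_{\mathcal L}(\bar x)$, and a function $\pi\colon V(G_{\mathcal L})\to\mathbb N$. A decorated landscape is of type $(D,\Delta,\beta,N_1,N_2,p)$ if it is of type $(D,\Delta,\beta)$, $|V(G_{\mathcal L})|\le N_1$, $|V(\mathcal L)|=N_2$ and $\pi$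 takes values in $\{0,\dots,p-1\}$. An isomorphism of decorated landscapes is a bijection of the vertex sets of the variable graphs inducing an isomorphism of the graphs compatible with the orders on all $\mathrm{Var}(x),\mathrm{Cl}(x)$ and with the local rules, inducing an isomorphism of the forests, and compatible with the decorations. *)

theory Defs
  imports Complex_Main "HOL-Library.FuncSet"
begin

text \<open>Decorated pseudo-landscapes with vertices drawn from nat.  Every decorated landscape
with finitely many vertices is isomorphic to one of this form, so counting isomorphism
classes of these counts all isomorphism classes.\<close>

record dland =
  vg_verts  :: "nat set"
  vg_edges  :: "(nat \<times> nat) set"
  vg_varord :: "nat \<Rightarrow> nat rel"
  vg_clord  :: "nat \<Rightarrow> nat rel"
  dl_rule   :: "nat \<Rightarrow> (nat \<Rightarrow> nat) set"
  dl_fverts :: "(nat \<times> nat) set"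
  dl_fedges :: "((nat \<times> nat) \<times> (nat \<times> nat) \<times> nat) set"  \<comment> \<open>labelled edges (source, target, label)\<close>
  dl_final  :: "nat \<Rightarrow> nat"
  dl_prev   :: "nat \<times> nat \<Rightarrow> nat \<Rightarrow> nat"
  dl_pi     :: "nat \<Rightarrow> nat"

definition Var :: "dland \<Rightarrow> nat \<Rightarrow> nat set" where
  "Var L x = {y. (x, y) \<in> vg_edges L}"

definition Cl :: "dland \<Rightarrow> nat \<Rightarrow> nat set" where
  "Cl L x = {y. (y, x) \<in> vg_edges L}"

definition variable_graph :: "dland \<Rightarrow> bool" where
  "variable_graph L \<longleftrightarrow> vg_edges L \<subseteq> vg_verts L \<times> vg_verts L \<and>
     (\<forall>x\<in>vg_verts L. well_order_on (Var L x) (vg_varord L x) \<and>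
                     well_order_on (Cl L x) (vg_clord L x))"

definition relE :: "dland \<Rightarrow> (nat \<times> nat) set" where
  "relE L = {(x, y). x \<in> vg_verts L \<and> y \<in> vg_verts L \<and> Var L x \<inter> Var L y \<noteq> {}}"

definition rel_deg :: "dland \<Rightarrow> nat \<Rightarrow> nat" where
  "rel_deg L x = card {y. (x, y) \<in> relE L}"

definition wo_least :: "nat rel \<Rightarrow> nat set \<Rightarrow> nat" where
  "wo_least r A = (THE v. v \<in> A \<and> (\<forall>w\<in>A. (v, w) \<in> r))"

definition rel_less :: "dland \<Rightarrow> nat \<Rightarrow> nat \<Rightarrow> nat \<Rightarrow> bool" where
  "rel_less L x y z \<longleftrightarrow> y \<noteq> z \<and>
     (let v = wo_least (vg_varord L x) (Var L x \<inter> Var L y);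
          w = wo_least (vg_varord L x) (Var L x \<inter> Var L z)
      in (v \<noteq> w \<and> (v, w) \<in> vg_varord L x) \<or> (v = w \<and> (y, z) \<in> vg_clord L v))"

definition rel_label :: "dland \<Rightarrow> nat \<Rightarrow> nat \<Rightarrow> nat" where
  "rel_label L x y = card {z. (x, z) \<in> relE L \<and> rel_less L x z y}"

definition canvasE :: "dland \<Rightarrow> ((nat \<times> nat) \<times> (nat \<times> nat) \<times> nat) set" where
  "canvasE L = {((x, i), (y, Suc i), rel_label L x y) | x y i. (x, y) \<in> relE L}"

definition assign :: "nat \<Rightarrow> nat set \<Rightarrow> (nat \<Rightarrow> nat) set" where
  "assign b A = A \<rightarrow>\<^sub>E {..<b}"

definition Rc :: "nat \<Rightarrow> dland \<Rightarrow> nat \<Rightarrow> (nat \<Rightarrow> nat) set" where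
  "Rc b L x = assign b (Var L x) - dl_rule L x"

definition pseudo_landscape :: "nat \<Rightarrow> dland \<Rightarrow> bool" where
  "pseudo_landscape b L \<longleftrightarrow> variable_graph L \<and>
     (\<forall>x\<in>vg_verts L. dl_rule L x \<subseteq> assign b (Var L x)) \<and>
     dl_fverts L \<subseteq> vg_verts L \<times> UNIV \<and>
     (\<forall>(u, v, l)\<in>dl_fedges L. u \<in> dl_fverts L \<and> v \<in> dl_fverts L \<and> (u, v, l) \<in> canvasE L) \<and>
     (\<forall>v\<in>dl_fverts L. card {e\<in>dl_fedges L. fst (snd e) = v} \<le> 1)"

definition landscape :: "nat \<Rightarrow> dland \<Rightarrow> bool" where
  "landscape b L \<longleftrightarrow> pseudo_landscape b L \<and>
     (\<forall>u\<in>dl_fverts L. \<forall>v\<in>dl_fverts L. u \<noteq> v \<and> snd u = snd v \<longrightarrow>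
        fst u \<noteq> fst v \<and> (fst u, fst v) \<notin> relE L)"

definition forest_rel :: "dland \<Rightarrow> ((nat \<times> nat) \<times> (nat \<times> nat)) set" where
  "forest_rel L = {(u, v). \<exists>l. (u, v, l) \<in> dl_fedges L}"

text \<open>Grounded: the minimal level in each connected component of For(L) is 0.\<close>
definition grounded :: "dland \<Rightarrow> bool" where
  "grounded L \<longleftrightarrow> (\<forall>u\<in>dl_fverts L. \<exists>v. (u, v) \<in> (forest_rel L \<union> (forest_rel L)\<inverse>)\<^sup>* \<and> snd v = 0)"

definition decoration_ok :: "nat \<Rightarrow> nat \<Rightarrow> dland \<Rightarrow> bool" where
  "decoration_ok b p L \<longleftrightarrow> dl_final L \<in> assign b (vg_verts L) \<and>
     (\<forall>u\<in>dl_fverts L. dl_prev L u \<in> Rc b L (fst u)) \<and>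
     (\<forall>x\<in>vg_verts L. dl_pi L x < p)"

definition of_type :: "nat \<Rightarrow> nat \<Rightarrow> nat \<Rightarrow> nat \<Rightarrow> nat \<Rightarrow> nat \<Rightarrow> nat \<Rightarrow> dland \<Rightarrow> bool" where
  "of_type b D \<Delta> \<beta> N1 N2 p L \<longleftrightarrow>
     (\<forall>x\<in>vg_verts L. card (Var L x) \<le> D \<and> rel_deg L x \<le> \<Delta> \<and> card (Rc b L x) \<le> \<beta>) \<and>
     finite (vg_verts L) \<and> card (vg_verts L) \<le> N1 \<and>
     finite (dl_fverts L) \<and> card (dl_fverts L) = N2 \<and> decoration_ok b p L"

definition grounded_dl_set :: "nat \<Rightarrow> nat \<Rightarrow> nat \<Rightarrow> nat \<Rightarrow> nat \<Rightarrow> nat \<Rightarrow> nat \<Rightarrow> dland set" where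
  "grounded_dl_set b D \<Delta> \<beta> N1 N2 p =
     {L. landscape b L \<and> grounded L \<and> of_type b D \<Delta> \<beta> N1 N2 p L}"

definition is_iso :: "nat \<Rightarrow> (nat \<Rightarrow> nat) \<Rightarrow> dland \<Rightarrow> dland \<Rightarrow> bool" where
  "is_iso b f L1 L2 \<longleftrightarrow> bij_betw f (vg_verts L1) (vg_verts L2) \<and>
     (\<forall>x\<in>vg_verts L1. \<forall>y\<in>vg_verts L1. (x, y) \<in> vg_edges L1 \<longleftrightarrow> (f x, f y) \<in> vg_edges L2) \<and>
     (\<forall>x\<in>vg_verts L1. \<forall>u\<in>vg_verts L1. \<forall>v\<in>vg_verts L1.
        ((u, v) \<in> vg_varord L1 x \<longleftrightarrow> (f u, f v) \<in> vg_varord L2 (f x)) \<and>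
        ((u, v) \<in> vg_clord L1 x \<longleftrightarrow> (f u, f v) \<in> vg_clord L2 (f x))) \<and>
     (\<forall>x\<in>vg_verts L1. \<forall>\<sigma>\<in>assign b (Var L1 x). \<forall>\<tau>\<in>assign b (Var L2 (f x)).
        (\<forall>v\<in>Var L1 x. \<tau> (f v) = \<sigma> v) \<longrightarrow> (\<sigma> \<in> dl_rule L1 x \<longleftrightarrow> \<tau> \<in> dl_rule L2 (f x))) \<and>
     (\<forall>x\<in>vg_verts L1. \<forall>i. (x, i) \<in> dl_fverts L1 \<longleftrightarrow> (f x, i) \<in> dl_fverts L2) \<and>
     (\<forall>x\<in>vg_verts L1. \<forall>y\<in>vg_verts L1. \<forall>i j l.
        ((x, i), (y, j), l) \<in> dl_fedges L1 \<longleftrightarrow> ((f x, i), (f y, j), l) \<in> dl_fedges L2) \<and>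
     (\<forall>x\<in>vg_verts L1. dl_final L2 (f x) = dl_final L1 x \<and> dl_pi L2 (f x) = dl_pi L1 x) \<and>
     (\<forall>u\<in>dl_fverts L1. \<forall>v\<in>Var L1 (fst u). dl_prev L2 (f (fst u), snd u) (f v) = dl_prev L1 u v)"

definition iso_rel :: "nat \<Rightarrow> dland set \<Rightarrow> (dland \<times> dland) set" where
  "iso_rel b S = {(L1, L2). L1 \<in> S \<and> L2 \<in> S \<and> (\<exists>f. is_iso b f L1 L2)}"

end

theory Submission
  imports Defs "HOL-Library.Product_Lexorder"
begin

text \<open>
  Number the vertices of the variable graph by \<open>0, \<dots>, n - 1\<close> with \<open>n \<le> N\<^sub>1\<close> and transport
  all structure along the numbering. The transported variable graph with its orders, rules,
  final values, \<open>\<pi>\<close>, the graph \<open>Rel(G)\<close> with its labels and the sets \<open>R\<^sup>c\<close> range over a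
  finite set depending only on \<open>b\<close>, \<open>N\<^sub>1\<close> and \<open>p\<close>, and two landscapes with the same transported
  data are isomorphic. So it remains to count forests and \<open>Prev\<close>-decorations over a fixed
  transported graph.

  In a grounded landscape every node above level 0 has exactly one parent, which lies one level
  lower on an out-neighbour in \<open>Rel(G)\<close> of its vertex. The forest is therefore determined by its
  roots (at most \<open>2\<^bsup>N\<^sub>1\<^esup>\<close> choices) and the set of numbers \<open>r \<Delta> + s\<close>, one per edge, where \<open>r\<close> is the
  rank of the source among the \<open>N\<^sub>2\<close> nodes ordered by level and then vertex and \<open>s < \<Delta>\<close> is the rank
  of the target vertex among the out-neighbours of the source vertex: the forest can be
  reconstructed level by level. There are at most
  \<open>\<Sum>k\<le>N\<^sub>2. (\<Delta> N\<^sub>2 choose k) \<le> (N\<^sub>2 + 1) (\<Delta>\<^sup>\<Delta> / (\<Delta> - 1)\<^bsup>\<Delta> - 1\<^esup>)\<^bsup>N\<^sub>2\<^esup>\<close> such sets, and each of the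
  \<open>N\<^sub>2\<close> nodes carries one of at most \<open>\<beta>\<close> values of \<open>Prev\<close>.
\<close>

section \<open>Binomial estimates\<close>

lemma choose_mult_le_entropy_power:
  fixes \<Delta> N k :: nat
  assumes "\<Delta> \<ge> 2" "k \<le> N"
  shows "real ((\<Delta> * N) choose k) \<le> (real \<Delta> ^ \<Delta> / real (\<Delta> - 1) ^ (\<Delta> - 1)) ^ N"
proof -
  define m where "m = \<Delta> * N"
  have "k \<le> m" using assms unfolding m_def by (simp add: le_trans)
  moreover have "(1 + (\<Delta> - 1)) ^ m = (\<Sum>j\<le>m. (m choose j) * 1 ^ j * (\<Delta> - 1) ^ (m - j))"
    using binomial[of 1 "\<Delta> - 1" m] by simp
  ultimately have "(m choose k) * (\<Delta> - 1) ^ (m - k) \<le> \<Delta> ^ m"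
    using assms(1) member_le_sum[of k "{..m}" "\<lambda>j. (m choose j) * 1 ^ j * (\<Delta> - 1) ^ (m - j)"] by simp
  moreover have "(\<Delta> - 1) ^ ((\<Delta> - 1) * N) \<le> (\<Delta> - 1) ^ (m - k)"
    using assms unfolding m_def by (intro power_increasing) (auto simp: diff_mult_distrib)
  ultimately have "(m choose k) * (\<Delta> - 1) ^ ((\<Delta> - 1) * N) \<le> \<Delta> ^ m"
    by (meson le_trans mult_le_mono2)
  then have "real (m choose k) * real (\<Delta> - 1) ^ ((\<Delta> - 1) * N) \<le> real \<Delta> ^ m"
    by (metis of_nat_le_iff of_nat_mult of_nat_power)
  moreover have "real (\<Delta> - 1) ^ ((\<Delta> - 1) * N) > 0" using assms by simp
  ultimately have "real (m choose k) \<le> real \<Delta> ^ m / real (\<Delta> - 1) ^ ((\<Delta> - 1) * N)"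
    by (simp add: field_simps)
  also have "\<dots> = (real \<Delta> ^ \<Delta> / real (\<Delta> - 1) ^ (\<Delta> - 1)) ^ N"
    unfolding m_def by (simp add: power_mult power_divide)
  finally show ?thesis unfolding m_def .
qed

lemma sum_choose_mult_le_entropy_power:
  fixes \<Delta> N :: nat
  assumes "\<Delta> \<ge> 2"
  shows "real (\<Sum>k\<le>N. (\<Delta> * N) choose k) \<le> real (N + 1) * (real \<Delta> ^ \<Delta> / real (\<Delta> - 1) ^ (\<Delta> - 1)) ^ N"
proof -
  have "real (\<Sum>k\<le>N. (\<Delta> * N) choose k) \<le> real (card {..N}) * (real \<Delta> ^ \<Delta> / real (\<Delta> - 1) ^ (\<Delta> - 1)) ^ N"
    unfolding of_nat_sum
    by (rule sum_bounded_above) (use choose_mult_le_entropy_power[OF assms] in auto)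
  then show ?thesis by simp
qed

lemma card_subsets_card_le:
  "card {Z. Z \<subseteq> {..<m::nat} \<and> card Z \<le> N} \<le> (\<Sum>k\<le>N. m choose k)"
proof -
  have "{Z. Z \<subseteq> {..<m} \<and> card Z \<le> N} = (\<Union>k\<le>N. {Z. Z \<subseteq> {..<m} \<and> card Z = k})" by auto
  then have "card {Z. Z \<subseteq> {..<m} \<and> card Z \<le> N} \<le> (\<Sum>k\<le>N. card {Z. Z \<subseteq> {..<m} \<and> card Z = k})"
    using card_UN_le[of "{..N}" "\<lambda>k. {Z. Z \<subseteq> {..<m} \<and> card Z = k}"] by simp
  also have "\<dots> = (\<Sum>k\<le>N. m choose k)" using n_subsets[of "{..<m}"] by simp
  finally show ?thesis .
qed

section \<open>Counting layered forests\<close>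

definition rank :: "('a \<Rightarrow> 'b::linorder) \<Rightarrow> 'a set \<Rightarrow> 'a \<Rightarrow> nat" where
  "rank key F u = card {w \<in> F. key w < key u}"

lemma rank_less_card: "finite F \<Longrightarrow> u \<in> F \<Longrightarrow> rank key F u < card F"
  unfolding rank_def by (rule psubset_card_mono) auto

lemma rank_strict_mono: "finite F \<Longrightarrow> w \<in> F \<Longrightarrow> key w < key u \<Longrightarrow> rank key F w < rank key F u"
  unfolding rank_def by (rule psubset_card_mono) auto

lemma rank_inj:
  assumes "finite F" "inj_on key F" "u \<in> F" "u' \<in> F" "rank key F u = rank key F u'"
  shows "u = u'"
proof (rule ccontr)
  assume "u \<noteq> u'"
  then have "key u < key u' \<or> key u' < key u" using assms(2-4) by (metis inj_onD neqE)
  then show False using rank_strict_mono[OF assms(1)] assms(3-5) by (metis less_irrefl)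
qed

lemma rank_swap_cong_below:
  assumes "{w \<in> F1. snd w \<le> snd u} = {w \<in> F2. snd w \<le> snd u}"
  shows "rank prod.swap F1 u = rank prod.swap F2 u"
proof -
  have "{w \<in> F1. prod.swap w < prod.swap u} = {w \<in> F2. prod.swap w < prod.swap u}"
    using assms by (auto simp: less_prod_def set_eq_iff) (metis less_imp_le order_refl)+
  then show ?thesis unfolding rank_def by simp
qed

lemma mult_add_eq_imp_eq:
  fixes q q' r r' \<Delta> :: nat
  assumes "r < \<Delta>" "r' < \<Delta>" "q * \<Delta> + r = q' * \<Delta> + r'"
  shows "q = q'" "r = r'"
proof -
  have "(q * \<Delta> + r) div \<Delta> = q" "(q' * \<Delta> + r') div \<Delta> = q'"
    "(q * \<Delta> + r) mod \<Delta> = r" "(q' * \<Delta> + r') mod \<Delta> = r'"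
    using assms(1,2) by simp_all
  then show "q = q'" "r = r'" using assms(3) by metis+
qed

definition layered_forests ::
    "nat rel \<Rightarrow> (nat \<times> nat \<Rightarrow> nat) \<Rightarrow> nat \<Rightarrow> nat \<Rightarrow>
     ((nat \<times> nat) set \<times> ((nat \<times> nat) \<times> (nat \<times> nat) \<times> nat) set) set" where
  "layered_forests A lab n N = {(F, E). finite F \<and> card F = N \<and> fst ` F \<subseteq> {..<n} \<and>
     (\<forall>u v l. (u, v, l) \<in> E \<longrightarrow>
        u \<in> F \<and> v \<in> F \<and> snd v = Suc (snd u) \<and> (fst u, fst v) \<in> A \<and> l = lab (fst u, fst v)) \<and>
     (\<forall>e\<in>E. \<forall>e'\<in>E. fst (snd e) = fst (snd e') \<longrightarrow> e = e') \<and>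
     (\<forall>v\<in>F. 0 < snd v \<longrightarrow> (\<exists>e\<in>E. fst (snd e) = v))}"

definition edge_number :: "nat rel \<Rightarrow> nat \<Rightarrow> (nat \<times> nat) set \<Rightarrow> (nat \<times> nat) \<times> (nat \<times> nat) \<times> nat \<Rightarrow> nat" where
  "edge_number A \<Delta> F e = rank prod.swap F (fst e) * \<Delta> + rank id (A `` {fst (fst e)}) (fst (fst (snd e)))"

definition forest_code ::
    "nat rel \<Rightarrow> nat \<Rightarrow> (nat \<times> nat) set \<Rightarrow> ((nat \<times> nat) \<times> (nat \<times> nat) \<times> nat) set \<Rightarrow> nat set \<times> nat set" where
  "forest_code A \<Delta> F E = ({x. (x, 0) \<in> F}, edge_number A \<Delta> F ` E)"

lemma layered_forestsD:
  assumes "(F, E) \<in> layered_forests A lab n N"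
  shows "finite F" "card F = N" "fst ` F \<subseteq> {..<n}"
    and "\<And>u v l. (u, v, l) \<in> E \<Longrightarrow> u \<in> F \<and> v \<in> F \<and> snd v = Suc (snd u) \<and> (fst u, fst v) \<in> A \<and> l = lab (fst u, fst v)"
    and "\<And>e e'. e \<in> E \<Longrightarrow> e' \<in> E \<Longrightarrow> fst (snd e) = fst (snd e') \<Longrightarrow> e = e'"
    and "\<And>v. v \<in> F \<Longrightarrow> 0 < snd v \<Longrightarrow> \<exists>e\<in>E. fst (snd e) = v"
  using assms unfolding layered_forests_def by auto

locale bounded_outdegree =
  fixes A :: "nat rel" and n \<Delta> :: nat
  assumes A_subset: "A \<subseteq> {..<n} \<times> {..<n}"
    and outdegree_le: "\<And>x. card (A `` {x}) \<le> \<Delta>"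
begin

lemma finite_neighbours: "finite (A `` {x})"
  by (rule finite_subset[of _ "{..<n}"]) (use A_subset in auto)

lemma neighbour_rank_less: "(x, y) \<in> A \<Longrightarrow> rank id (A `` {x}) y < \<Delta>"
  using rank_less_card[OF finite_neighbours, of y x id] outdegree_le[of x] by simp

lemma edge_determined_by_code:
  assumes forests: "(F1, E1) \<in> layered_forests A lab n N" "(F2, E2) \<in> layered_forests A lab n N"
    and numbers: "edge_number A \<Delta> F1 ` E1 = edge_number A \<Delta> F2 ` E2"
    and below: "{w \<in> F1. snd w \<le> snd u} = {w \<in> F2. snd w \<le> snd u}"
    and edge: "(u, v, l) \<in> E1"
  shows "(u, v, l) \<in> E2"
proof -
  note e1 = layered_forestsD(4)[OF forests(1) edge]
  have "u \<in> F2" using below e1 by blast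
  have "edge_number A \<Delta> F2 (u, v, l) = edge_number A \<Delta> F1 (u, v, l)"
    using rank_swap_cong_below[OF below] by (simp add: edge_number_def)
  then obtain u' v' l' where edge': "(u', v', l') \<in> E2"
    and same: "edge_number A \<Delta> F2 (u', v', l') = edge_number A \<Delta> F2 (u, v, l)"
    using numbers edge by (metis (no_types, lifting) image_eqI image_iff prod_cases3)
  note e2 = layered_forestsD(4)[OF forests(2) edge']
  have "rank prod.swap F2 u' = rank prod.swap F2 u"
    and nb: "rank id (A `` {fst u'}) (fst v') = rank id (A `` {fst u}) (fst v)"
    using mult_add_eq_imp_eq[OF neighbour_rank_less neighbour_rank_less same[unfolded edge_number_def]] e1 e2
    by simp_all
  moreover have "inj_on prod.swap F2" by (auto simp: inj_on_def)
  ultimately have "u' = u"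
    using rank_inj[OF layered_forestsD(1)[OF forests(2)]] e2 \<open>u \<in> F2\<close> by blast
  then have "fst v' = fst v"
    using rank_inj[OF finite_neighbours, of id] nb e1 e2 by simp blast
  then have "v' = v" using \<open>u' = u\<close> e1 e2 by (simp add: prod_eq_iff)
  then show ?thesis using edge' e1 e2 \<open>u' = u\<close> by simp
qed

lemma levels_determined_by_code:
  assumes forests: "(F1, E1) \<in> layered_forests A lab n N" "(F2, E2) \<in> layered_forests A lab n N"
    and code: "forest_code A \<Delta> F1 E1 = forest_code A \<Delta> F2 E2"
  shows "{w \<in> F1. snd w \<le> i} = {w \<in> F2. snd w \<le> i}"
proof (induction i)
  case 0
  have "(x, 0) \<in> F1 \<longleftrightarrow> (x, 0) \<in> F2" for x using code by (simp add: forest_code_def set_eq_iff)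
  then show ?case by (auto simp: set_eq_iff)
next
  case (Suc i)
  have step: "v \<in> Fb"
    if fa: "(Fa, Ea) \<in> layered_forests A lab n N" and fb: "(Fb, Eb) \<in> layered_forests A lab n N"
      and numbers: "edge_number A \<Delta> Fa ` Ea = edge_number A \<Delta> Fb ` Eb"
      and below: "{w \<in> Fa. snd w \<le> i} = {w \<in> Fb. snd w \<le> i}"
      and v: "v \<in> Fa" "snd v = Suc i"
    for Fa Ea Fb Eb v
  proof -
    obtain u l where parent: "(u, v, l) \<in> Ea"
      using layered_forestsD(6)[OF fa v(1)] v(2) by (metis prod.collapse zero_less_Suc)
    then have "snd u = i" using layered_forestsD(4)[OF fa parent] v(2) by simp
    then have "(u, v, l) \<in> Eb" using edge_determined_by_code[OF fa fb numbers] below parent by simp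
    then show ?thesis using layered_forestsD(4)[OF fb] by blast
  qed
  have numbers: "edge_number A \<Delta> F1 ` E1 = edge_number A \<Delta> F2 ` E2"
    using code by (simp add: forest_code_def)
  show ?case
    using Suc.IH step[OF forests numbers Suc.IH] step[OF forests(2,1) numbers[symmetric] Suc.IH[symmetric]]
    by (auto simp: le_Suc_eq set_eq_iff)
qed

lemma forest_code_inj: "inj_on (\<lambda>(F, E). forest_code A \<Delta> F E) (layered_forests A lab n N)"
proof (rule inj_onI)
  fix x y
  assume "x \<in> layered_forests A lab n N" "y \<in> layered_forests A lab n N"
    and "(\<lambda>(F, E). forest_code A \<Delta> F E) x = (\<lambda>(F, E). forest_code A \<Delta> F E) y"
  moreover obtain F1 E1 F2 E2 where xy: "x = (F1, E1)" "y = (F2, E2)" by fastforce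
  ultimately have forests: "(F1, E1) \<in> layered_forests A lab n N" "(F2, E2) \<in> layered_forests A lab n N"
    and code: "forest_code A \<Delta> F1 E1 = forest_code A \<Delta> F2 E2"
    by simp_all
  note levels = levels_determined_by_code[OF forests code]
  have numbers: "edge_number A \<Delta> F1 ` E1 = edge_number A \<Delta> F2 ` E2"
    using code by (simp add: forest_code_def)
  have "F1 = F2" using levels by blast
  moreover have "E1 = E2"
    using edge_determined_by_code[OF forests numbers levels]
      edge_determined_by_code[OF forests(2,1) numbers[symmetric] levels[symmetric]]
    by auto
  ultimately show "x = y" using xy by simp
qed

lemma forest_code_range:
  assumes forest: "(F, E) \<in> layered_forests A lab n N"
  shows "forest_code A \<Delta> F E \<in> Pow {..<n} \<times> {Z. Z \<subseteq> {..<\<Delta> * N} \<and> card Z \<le> N}"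
proof -
  note F = layered_forestsD[OF forest]
  have "\<forall>e\<in>E. edge_number A \<Delta> F e < \<Delta> * N"
  proof
    fix e assume "e \<in> E"
    obtain u v l where e: "e = (u, v, l)" by (cases e)
    have uv: "u \<in> F" "(fst u, fst v) \<in> A" using F(4)[of u v l] \<open>e \<in> E\<close> unfolding e by simp_all
    have "rank prod.swap F u < N" using rank_less_card[OF F(1) uv(1)] F(2) by simp
    moreover have "rank id (A `` {fst u}) (fst v) < \<Delta>" using neighbour_rank_less[OF uv(2)] .
    ultimately have "edge_number A \<Delta> F e < Suc (rank prod.swap F u) * \<Delta>"
      using e by (simp add: edge_number_def)
    also have "\<dots> \<le> \<Delta> * N"
      using \<open>rank prod.swap F u < N\<close> by (metis Suc_leI mult.commute mult_le_mono1)
    finally show "edge_number A \<Delta> F e < \<Delta> * N" .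
  qed
  moreover have "inj_on (\<lambda>e. fst (snd e)) E" using F(5) by (meson inj_onI)
  moreover have "(\<lambda>e. fst (snd e)) ` E \<subseteq> F" using F(4) by fastforce
  ultimately have "finite E" "card E \<le> N" using F(1,2) inj_on_finite card_inj_on_le by metis+
  then have "card (edge_number A \<Delta> F ` E) \<le> N" using card_image_le le_trans by blast
  with \<open>\<forall>e\<in>E. edge_number A \<Delta> F e < \<Delta> * N\<close> show ?thesis
    using F(3) by (auto simp: forest_code_def)
qed

lemma card_layered_forests:
  "finite (layered_forests A lab n N)"
  "card (layered_forests A lab n N) \<le> 2 ^ n * (\<Sum>k\<le>N. (\<Delta> * N) choose k)"
proof -
  let ?C = "Pow {..<n} \<times> {Z. Z \<subseteq> {..<\<Delta> * N} \<and> card Z \<le> N}"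
  have maps_to: "(\<lambda>(F, E). forest_code A \<Delta> F E) ` layered_forests A lab n N \<subseteq> ?C"
  proof (rule image_subsetI, clarify)
    fix F E assume "(F, E) \<in> layered_forests A lab n N"
    then show "forest_code A \<Delta> F E \<in> ?C" by (rule forest_code_range)
  qed
  show "finite (layered_forests A lab n N)"
    using inj_on_finite[OF forest_code_inj maps_to] by simp
  have "card (layered_forests A lab n N) \<le> card ?C"
    using card_inj_on_le[OF forest_code_inj maps_to] by simp
  also have "\<dots> \<le> 2 ^ n * (\<Sum>k\<le>N. (\<Delta> * N) choose k)"
    using card_subsets_card_le by (simp add: card_cartesian_product card_Pow)
  finally show "card (layered_forests A lab n N) \<le> 2 ^ n * (\<Sum>k\<le>N. (\<Delta> * N) choose k)" .
qed

end

section \<open>Relabelling along an injection\<close>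

definition rel_relabel :: "('a \<Rightarrow> 'b) \<Rightarrow> 'a set \<Rightarrow> 'a rel \<Rightarrow> 'b rel" where
  "rel_relabel h V r = map_prod h h ` (r \<inter> V \<times> V)"

definition assign_relabel :: "('a \<Rightarrow> 'b) \<Rightarrow> 'a set \<Rightarrow> 'a set \<Rightarrow> ('a \<Rightarrow> 'c) \<Rightarrow> 'b \<Rightarrow> 'c" where
  "assign_relabel h V W \<sigma> = restrict (\<sigma> \<circ> inv_into V h) (h ` W)"

definition fedge_relabel :: "('a \<Rightarrow> 'b) \<Rightarrow> ('a \<times> nat) \<times> ('a \<times> nat) \<times> nat \<Rightarrow> ('b \<times> nat) \<times> ('b \<times> nat) \<times> nat" where
  "fedge_relabel h = (\<lambda>((x, i), (y, j), l). ((h x, i), (h y, j), l))"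

lemma rel_relabel_iff:
  assumes "inj_on h V" "x \<in> V" "y \<in> V"
  shows "(h x, h y) \<in> rel_relabel h V r \<longleftrightarrow> (x, y) \<in> r"
proof
  assume "(h x, h y) \<in> rel_relabel h V r"
  then obtain x' y' where "(x', y') \<in> r" "x' \<in> V" "y' \<in> V" "h x = h x'" "h y = h y'"
    unfolding rel_relabel_def by auto
  then show "(x, y) \<in> r" using assms inj_onD by metis
qed (use assms in \<open>force simp: rel_relabel_def\<close>)

lemma rel_relabel_subset: "rel_relabel h V r \<subseteq> h ` V \<times> h ` V"
  unfolding rel_relabel_def by auto

lemma assign_relabel_apply:
  assumes "inj_on h V" "W \<subseteq> V" "w \<in> W"
  shows "assign_relabel h V W \<sigma> (h w) = \<sigma> w"
  using assms unfolding assign_relabel_def by (auto simp: inv_into_f_f subsetD)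

lemma assign_relabel_in_assign:
  assumes "inj_on h V" "W \<subseteq> V" "\<sigma> \<in> assign b W"
  shows "assign_relabel h V W \<sigma> \<in> assign b (h ` W)"
  using assms unfolding assign_relabel_def assign_def by (auto simp: inv_into_f_f subsetD)

lemma assign_relabel_inj:
  assumes "inj_on h V" "W \<subseteq> V"
  shows "inj_on (assign_relabel h V W) (assign b W)"
proof (rule inj_onI, rule ext)
  fix \<sigma> \<sigma>' w
  assume \<sigma>: "\<sigma> \<in> assign b W" "\<sigma>' \<in> assign b W" and eq: "assign_relabel h V W \<sigma> = assign_relabel h V W \<sigma>'"
  show "\<sigma> w = \<sigma>' w"
  proof (cases "w \<in> W")
    case True
    then have "\<sigma> w = assign_relabel h V W \<sigma> (h w)" by (simp add: assign_relabel_apply[OF assms])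
    also have "\<dots> = \<sigma>' w" using True eq by (simp add: assign_relabel_apply[OF assms])
    finally show ?thesis .
  next
    case False
    then show ?thesis using \<sigma> unfolding assign_def by (metis PiE_arb)
  qed
qed

lemma fverts_relabel_iff:
  assumes "inj_on h V" "F \<subseteq> V \<times> UNIV" "x \<in> V"
  shows "(h x, i) \<in> map_prod h id ` F \<longleftrightarrow> (x, i) \<in> F"
proof
  assume "(h x, i) \<in> map_prod h id ` F"
  then obtain x' where "(x', i) \<in> F" "h x = h x'" by auto
  moreover from this have "x' \<in> V" using assms(2) by auto
  ultimately show "(x, i) \<in> F" using assms inj_onD by metis
qed force

lemma fedges_relabel_iff:
  assumes "inj_on h V" "\<forall>((x, i), (y, j), l)\<in>E. x \<in> V \<and> y \<in> V" "x \<in> V" "y \<in> V"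
  shows "((h x, i), (h y, j), l) \<in> fedge_relabel h ` E \<longleftrightarrow> ((x, i), (y, j), l) \<in> E"
proof
  assume "((h x, i), (h y, j), l) \<in> fedge_relabel h ` E"
  then obtain x' y' where e: "((x', i), (y', j), l) \<in> E" "h x = h x'" "h y = h y'"
    unfolding fedge_relabel_def by force
  moreover have "x' \<in> V" "y' \<in> V" using assms(2) e(1) by fast+
  ultimately show "((x, i), (y, j), l) \<in> E" using assms inj_onD by metis
qed (force simp: fedge_relabel_def)

lemma fedge_relabel_apply: "fedge_relabel h (u, v, l) = (map_prod h id u, map_prod h id v, l)"
  by (cases u, cases v) (simp add: fedge_relabel_def)

lemma fedge_relabelE:
  assumes "d \<in> fedge_relabel h ` E"
  obtains u v l where "(u, v, l) \<in> E" "d = (map_prod h id u, map_prod h id v, l)"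
proof -
  from assms obtain e where e: "d = fedge_relabel h e" "e \<in> E" by (rule imageE)
  obtain u v l where "e = (u, v, l)" by (rule prod_cases3)
  then show ?thesis using e that by (simp add: fedge_relabel_apply)
qed

section \<open>Isomorphisms of pseudo-landscapes\<close>

lemma pseudo_landscape_edges: "pseudo_landscape b L \<Longrightarrow> vg_edges L \<subseteq> vg_verts L \<times> vg_verts L"
  by (simp add: pseudo_landscape_def variable_graph_def)

lemma Var_subset_verts: "pseudo_landscape b L \<Longrightarrow> Var L x \<subseteq> vg_verts L"
  using pseudo_landscape_edges unfolding Var_def by blast

lemma pseudo_landscape_rule: "pseudo_landscape b L \<Longrightarrow> x \<in> vg_verts L \<Longrightarrow> dl_rule L x \<subseteq> assign b (Var L x)"
  by (simp add: pseudo_landscape_def)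

lemma pseudo_landscape_fverts: "pseudo_landscape b L \<Longrightarrow> dl_fverts L \<subseteq> vg_verts L \<times> UNIV"
  by (simp add: pseudo_landscape_def)

lemma forest_edgeD:
  assumes "pseudo_landscape b L" "(u, v, l) \<in> dl_fedges L"
  shows "u \<in> dl_fverts L" "v \<in> dl_fverts L" "snd v = Suc (snd u)"
    "(fst u, fst v) \<in> relE L" "l = rel_label L (fst u) (fst v)"
proof -
  have "u \<in> dl_fverts L \<and> v \<in> dl_fverts L \<and> (u, v, l) \<in> canvasE L"
    using assms unfolding pseudo_landscape_def by fast
  then show "u \<in> dl_fverts L" "v \<in> dl_fverts L" "snd v = Suc (snd u)"
    "(fst u, fst v) \<in> relE L" "l = rel_label L (fst u) (fst v)"
    unfolding canvasE_def by auto
qed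

lemma forest_edge_verts:
  "pseudo_landscape b L \<Longrightarrow> \<forall>((x, i), (y, j), l)\<in>dl_fedges L. x \<in> vg_verts L \<and> y \<in> vg_verts L"
  using forest_edgeD(1,2) pseudo_landscape_fverts by fastforce

lemma Var_image_of_edge_iso:
  assumes bij: "bij_betw f (vg_verts L1) (vg_verts L2)"
    and edges: "\<forall>x\<in>vg_verts L1. \<forall>y\<in>vg_verts L1. (x, y) \<in> vg_edges L1 \<longleftrightarrow> (f x, f y) \<in> vg_edges L2"
    and sub1: "vg_edges L1 \<subseteq> vg_verts L1 \<times> vg_verts L1" and sub2: "vg_edges L2 \<subseteq> vg_verts L2 \<times> vg_verts L2"
    and x: "x \<in> vg_verts L1"
  shows "Var L2 (f x) = f ` Var L1 x"
proof
  show "f ` Var L1 x \<subseteq> Var L2 (f x)"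
    using edges x sub1 unfolding Var_def by blast
  show "Var L2 (f x) \<subseteq> f ` Var L1 x"
  proof
    fix z assume "z \<in> Var L2 (f x)"
    then have z: "(f x, z) \<in> vg_edges L2" unfolding Var_def by blast
    then obtain y where "y \<in> vg_verts L1" "z = f y"
      using sub2 bij unfolding bij_betw_def by blast
    then show "z \<in> f ` Var L1 x" using edges x z unfolding Var_def by blast
  qed
qed

lemma is_isoD:
  assumes "is_iso b f L1 L2"
  shows "bij_betw f (vg_verts L1) (vg_verts L2)"
    and "\<forall>x\<in>vg_verts L1. \<forall>y\<in>vg_verts L1. (x, y) \<in> vg_edges L1 \<longleftrightarrow> (f x, f y) \<in> vg_edges L2"
    and "\<forall>x\<in>vg_verts L1. \<forall>u\<in>vg_verts L1. \<forall>v\<in>vg_verts L1.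
           ((u, v) \<in> vg_varord L1 x \<longleftrightarrow> (f u, f v) \<in> vg_varord L2 (f x)) \<and>
           ((u, v) \<in> vg_clord L1 x \<longleftrightarrow> (f u, f v) \<in> vg_clord L2 (f x))"
    and "\<forall>x\<in>vg_verts L1. \<forall>\<sigma>\<in>assign b (Var L1 x). \<forall>\<tau>\<in>assign b (Var L2 (f x)).
           (\<forall>v\<in>Var L1 x. \<tau> (f v) = \<sigma> v) \<longrightarrow> (\<sigma> \<in> dl_rule L1 x \<longleftrightarrow> \<tau> \<in> dl_rule L2 (f x))"
    and "\<forall>x\<in>vg_verts L1. \<forall>i. (x, i) \<in> dl_fverts L1 \<longleftrightarrow> (f x, i) \<in> dl_fverts L2"
    and "\<forall>x\<in>vg_verts L1. \<forall>y\<in>vg_verts L1. \<forall>i j l.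
           ((x, i), (y, j), l) \<in> dl_fedges L1 \<longleftrightarrow> ((f x, i), (f y, j), l) \<in> dl_fedges L2"
    and "\<forall>x\<in>vg_verts L1. dl_final L2 (f x) = dl_final L1 x \<and> dl_pi L2 (f x) = dl_pi L1 x"
    and "\<forall>u\<in>dl_fverts L1. \<forall>v\<in>Var L1 (fst u). dl_prev L2 (f (fst u), snd u) (f v) = dl_prev L1 u v"
  using assms unfolding is_iso_def by simp_all

lemma Var_iso:
  assumes "is_iso b f L1 L2" "pseudo_landscape b L1" "pseudo_landscape b L2" "x \<in> vg_verts L1"
  shows "Var L2 (f x) = f ` Var L1 x"
  using Var_image_of_edge_iso[OF is_isoD(1,2)[OF assms(1)]] pseudo_landscape_edges assms(2-4) by blast

lemma is_iso_rule_comp: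
  assumes f: "is_iso b f L1 L2" and g: "is_iso b g L2 L3"
    and L1: "pseudo_landscape b L1" and L2: "pseudo_landscape b L2"
    and x: "x \<in> vg_verts L1"
    and \<sigma>: "\<sigma> \<in> assign b (Var L1 x)" and \<tau>: "\<tau> \<in> assign b (Var L3 (g (f x)))"
    and agree: "\<forall>v\<in>Var L1 x. \<tau> (g (f v)) = \<sigma> v"
  shows "\<sigma> \<in> dl_rule L1 x \<longleftrightarrow> \<tau> \<in> dl_rule L3 (g (f x))"
proof -
  have inj: "inj_on f (vg_verts L1)" using is_isoD(1)[OF f] bij_betw_imp_inj_on by blast
  have Var2: "Var L2 (f x) = f ` Var L1 x" by (rule Var_iso[OF f L1 L2 x])
  define \<rho> where "\<rho> = assign_relabel f (vg_verts L1) (Var L1 x) \<sigma>"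
  have \<rho>: "\<rho> \<in> assign b (Var L2 (f x))"
    unfolding \<rho>_def Var2 by (rule assign_relabel_in_assign[OF inj Var_subset_verts[OF L1] \<sigma>])
  have \<rho>_f: "\<rho> (f v) = \<sigma> v" if "v \<in> Var L1 x" for v
    unfolding \<rho>_def by (rule assign_relabel_apply[OF inj Var_subset_verts[OF L1] that])
  have "\<sigma> \<in> dl_rule L1 x \<longleftrightarrow> \<rho> \<in> dl_rule L2 (f x)"
    using is_isoD(4)[OF f] x \<sigma> \<rho> \<rho>_f by blast
  also have "\<dots> \<longleftrightarrow> \<tau> \<in> dl_rule L3 (g (f x))"
  proof -
    have "\<forall>w\<in>Var L2 (f x). \<tau> (g w) = \<rho> w" using agree \<rho>_f unfolding Var2 by auto
    then show ?thesis using is_isoD(4)[OF g] bij_betw_apply[OF is_isoD(1)[OF f] x] \<rho> \<tau> by blast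
  qed
  finally show ?thesis .
qed

lemma is_iso_comp:
  assumes f: "is_iso b f L1 L2" and g: "is_iso b g L2 L3"
    and L1: "pseudo_landscape b L1" and L2: "pseudo_landscape b L2"
  shows "is_iso b (g \<circ> f) L1 L3"
proof -
  have f_in: "f x \<in> vg_verts L2" if "x \<in> vg_verts L1" for x
    using bij_betw_apply[OF is_isoD(1)[OF f] that] .
  have prev: "dl_prev L3 (g (f (fst u)), snd u) (g (f v)) = dl_prev L1 u v"
    if u: "u \<in> dl_fverts L1" and v: "v \<in> Var L1 (fst u)" for u v
  proof -
    have x: "fst u \<in> vg_verts L1" using u pseudo_landscape_fverts[OF L1] by auto
    have "(f (fst u), snd u) \<in> dl_fverts L2" using is_isoD(5)[OF f] x u by (metis prod.collapse)
    moreover have "f v \<in> Var L2 (f (fst u))" using Var_iso[OF f L1 L2 x] v by simp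
    ultimately have "dl_prev L3 (g (f (fst u)), snd u) (g (f v)) = dl_prev L2 (f (fst u), snd u) (f v)"
      using is_isoD(8)[OF g] by fastforce
    also have "\<dots> = dl_prev L1 u v" using is_isoD(8)[OF f] u v by blast
    finally show ?thesis .
  qed
  show ?thesis
    unfolding is_iso_def comp_apply
    using bij_betw_trans[OF is_isoD(1)[OF f] is_isoD(1)[OF g]]
      is_isoD(2,3,5,6,7)[OF f] is_isoD(2,3,5,6,7)[OF g] f_in
      is_iso_rule_comp[OF f g L1 L2] prev
    by (simp add: comp_def)
qed

section \<open>Codes of numbered landscapes\<close>

definition numbering :: "dland \<Rightarrow> nat \<Rightarrow> nat" where
  "numbering L = (SOME h. bij_betw h (vg_verts L) {..<card (vg_verts L)})"

lemma numbering_bij: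
  assumes "finite (vg_verts L)"
  shows "bij_betw (numbering L) (vg_verts L) {..<card (vg_verts L)}"
proof -
  obtain h where "bij_betw h (vg_verts L) {..<card (vg_verts L)}"
    using ex_bij_betw_finite_nat[OF assms] by (auto simp: atLeast0LessThan)
  then show ?thesis unfolding numbering_def by (rule someI[of "\<lambda>h. bij_betw h (vg_verts L) {..<card (vg_verts L)}"])
qed

definition relabel_fun :: "('a \<Rightarrow> nat) \<Rightarrow> 'a set \<Rightarrow> ('a \<Rightarrow> 'b) \<Rightarrow> nat \<Rightarrow> 'b" where
  "relabel_fun h V g = restrict (g \<circ> inv_into V h) {..<card V}"

type_synonym graph_code =
  "nat \<times> nat rel \<times> (nat \<Rightarrow> nat rel) \<times> (nat \<Rightarrow> nat rel) \<times> (nat \<Rightarrow> (nat \<Rightarrow> nat) set) \<times>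
   (nat \<Rightarrow> nat) \<times> (nat \<Rightarrow> nat) \<times> nat rel \<times> (nat \<times> nat \<Rightarrow> nat) \<times> (nat \<Rightarrow> (nat \<Rightarrow> nat) set)"

type_synonym forest_data =
  "(nat \<times> nat) set \<times> ((nat \<times> nat) \<times> (nat \<times> nat) \<times> nat) set \<times> (nat \<times> nat \<Rightarrow> nat \<Rightarrow> nat)"

definition label_table :: "dland \<Rightarrow> (nat \<Rightarrow> nat) \<Rightarrow> nat \<times> nat \<Rightarrow> nat" where
  "label_table L h = (let V = vg_verts L; n = card V in
     restrict (\<lambda>(i, j). rel_label L (inv_into V h i) (inv_into V h j)) ({..<n} \<times> {..<n}))"

text \<open>The last three components (\<open>Rel(G)\<close>, its labels and the sets \<open>R\<^sup>c\<close>) are determined by the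
  others; they are recorded so that the admissible forest data can be read off the code.\<close>

definition graph_code :: "nat \<Rightarrow> dland \<Rightarrow> (nat \<Rightarrow> nat) \<Rightarrow> graph_code" where
  "graph_code b L h = (let V = vg_verts L; n = card V in
     (n, rel_relabel h V (vg_edges L),
      relabel_fun h V (\<lambda>x. rel_relabel h V (vg_varord L x)),
      relabel_fun h V (\<lambda>x. rel_relabel h V (vg_clord L x)),
      relabel_fun h V (\<lambda>x. assign_relabel h V (Var L x) ` dl_rule L x),
      relabel_fun h V (dl_final L),
      relabel_fun h V (dl_pi L),
      rel_relabel h V (relE L),
      label_table L h,
      relabel_fun h V (\<lambda>x. assign_relabel h V (Var L x) ` Rc b L x)))"

definition forest_data :: "dland \<Rightarrow> (nat \<Rightarrow> nat) \<Rightarrow> forest_data" where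
  "forest_data L h = (let V = vg_verts L; F = map_prod h id ` dl_fverts L in
     (F, fedge_relabel h ` dl_fedges L,
      restrict (\<lambda>(i, k). assign_relabel h V (Var L (inv_into V h i)) (dl_prev L (inv_into V h i, k))) F))"

locale two_numberings =
  fixes V1 V2 :: "nat set" and h1 h2 :: "nat \<Rightarrow> nat"
  assumes bij1: "bij_betw h1 V1 {..<card V1}" and bij2: "bij_betw h2 V2 {..<card V2}"
    and same_card: "card V1 = card V2"
begin

definition matching :: "nat \<Rightarrow> nat" where
  "matching = inv_into V2 h2 \<circ> h1"

lemma inj1: "inj_on h1 V1" and inj2: "inj_on h2 V2"
  using bij1 bij2 bij_betw_imp_inj_on by blast+

lemma bij_matching: "bij_betw matching V1 V2"
  unfolding matching_def using bij_betw_trans[OF bij1 bij_betw_inv_into[OF bij2[folded same_card]]] .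

lemma matching_in: "x \<in> V1 \<Longrightarrow> matching x \<in> V2"
  by (rule bij_betw_apply[OF bij_matching])

lemma h1_in: "x \<in> V1 \<Longrightarrow> h1 x < card V1"
  using bij_betw_apply[OF bij1, of x] by simp

lemma h2_matching: "x \<in> V1 \<Longrightarrow> h2 (matching x) = h1 x"
  unfolding matching_def using bij2 h1_in same_card by (simp add: bij_betw_inv_into_right)

lemma inv_into_h1: "x \<in> V1 \<Longrightarrow> inv_into V1 h1 (h1 x) = x" and inv_into_h2: "x \<in> V1 \<Longrightarrow> inv_into V2 h2 (h1 x) = matching x"
  using inj1 by (simp_all add: matching_def)

lemma relabel_fun_eqD:
  assumes "relabel_fun h1 V1 g1 = relabel_fun h2 V2 g2" "x \<in> V1"
  shows "g2 (matching x) = g1 x"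
  using fun_cong[OF assms(1), of "h1 x"] h1_in[OF assms(2)] same_card
  by (simp add: relabel_fun_def inv_into_h1 inv_into_h2 assms(2))

lemma rel_relabel_eqD:
  assumes "rel_relabel h1 V1 r1 = rel_relabel h2 V2 r2" "x \<in> V1" "y \<in> V1"
  shows "(x, y) \<in> r1 \<longleftrightarrow> (matching x, matching y) \<in> r2"
  using rel_relabel_iff[OF inj1 assms(2,3), of r1] rel_relabel_iff[OF inj2 matching_in matching_in, of x y r2]
    assms by (simp add: h2_matching)

lemma assign_relabel_matching:
  assumes W1: "W1 \<subseteq> V1" and agree: "\<forall>w\<in>W1. \<tau> (matching w) = \<sigma> w"
  shows "assign_relabel h1 V1 W1 \<sigma> = assign_relabel h2 V2 (matching ` W1) \<tau>"
proof
  fix j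
  have W2: "matching ` W1 \<subseteq> V2" using W1 matching_in by blast
  have img: "h2 ` matching ` W1 = h1 ` W1"
    using W1 h2_matching by (force simp: image_image)
  show "assign_relabel h1 V1 W1 \<sigma> j = assign_relabel h2 V2 (matching ` W1) \<tau> j"
  proof (cases "j \<in> h1 ` W1")
    case True
    then obtain w where w: "w \<in> W1" "j = h1 w" by blast
    then show ?thesis
      using assign_relabel_apply[OF inj1 W1 w(1), of \<sigma>] assign_relabel_apply[OF inj2 W2, of "matching w" \<tau>]
        agree h2_matching W1 by auto
  next
    case False
    then show ?thesis using img by (simp add: assign_relabel_def)
  qed
qed

lemma relabelled_rules_eq_iff:
  assumes rules: "assign_relabel h1 V1 W1 ` R1 = assign_relabel h2 V2 (matching ` W1) ` R2"
    and R1: "R1 \<subseteq> assign b W1" and R2: "R2 \<subseteq> assign b (matching ` W1)" and W1: "W1 \<subseteq> V1"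
    and \<sigma>: "\<sigma> \<in> assign b W1" and \<tau>: "\<tau> \<in> assign b (matching ` W1)"
    and agree: "\<forall>w\<in>W1. \<tau> (matching w) = \<sigma> w"
  shows "\<sigma> \<in> R1 \<longleftrightarrow> \<tau> \<in> R2"
proof -
  have W2: "matching ` W1 \<subseteq> V2" using W1 matching_in by blast
  note same = assign_relabel_matching[OF W1 agree]
  note injA = assign_relabel_inj[OF inj1 W1, of b] and injB = assign_relabel_inj[OF inj2 W2, of b]
  have "\<sigma> \<in> R1 \<longleftrightarrow> assign_relabel h1 V1 W1 \<sigma> \<in> assign_relabel h1 V1 W1 ` R1"
    using inj_on_image_mem_iff[OF injA \<sigma> R1] by simp
  also have "\<dots> \<longleftrightarrow> \<tau> \<in> R2"
    using inj_on_image_mem_iff[OF injB \<tau> R2] rules same by simp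
  finally show ?thesis .
qed

lemma fverts_relabel_eqD:
  assumes "map_prod h1 id ` F1 = map_prod h2 id ` F2" "F1 \<subseteq> V1 \<times> UNIV" "F2 \<subseteq> V2 \<times> UNIV" "x \<in> V1"
  shows "(x, i) \<in> F1 \<longleftrightarrow> (matching x, i) \<in> F2"
  using fverts_relabel_iff[OF inj1 assms(2,4), of i] fverts_relabel_iff[OF inj2 assms(3) matching_in[OF assms(4)], of i]
    assms(1) h2_matching[OF assms(4)] by simp

lemma fedges_relabel_eqD:
  assumes "fedge_relabel h1 ` E1 = fedge_relabel h2 ` E2"
    "\<forall>((x, i), (y, j), l)\<in>E1. x \<in> V1 \<and> y \<in> V1" "\<forall>((x, i), (y, j), l)\<in>E2. x \<in> V2 \<and> y \<in> V2"
    "x \<in> V1" "y \<in> V1"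
  shows "((x, i), (y, j), l) \<in> E1 \<longleftrightarrow> ((matching x, i), (matching y, j), l) \<in> E2"
  using fedges_relabel_iff[OF inj1 assms(2,4,5), of i j l]
    fedges_relabel_iff[OF inj2 assms(3) matching_in[OF assms(4)] matching_in[OF assms(5)], of i j l]
    assms(1) h2_matching assms(4,5) by simp

end

locale equal_codes = two_numberings "vg_verts L1" "vg_verts L2" h1 h2
  for L1 L2 :: dland and h1 h2 :: "nat \<Rightarrow> nat" +
  fixes b :: nat
  assumes pl1: "pseudo_landscape b L1" and pl2: "pseudo_landscape b L2"
    and graph_code_eq: "graph_code b L1 h1 = graph_code b L2 h2"
    and forest_data_eq: "forest_data L1 h1 = forest_data L2 h2"
begin

lemma graph_code_components:
  "rel_relabel h1 (vg_verts L1) (vg_edges L1) = rel_relabel h2 (vg_verts L2) (vg_edges L2)"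
  "relabel_fun h1 (vg_verts L1) (\<lambda>x. rel_relabel h1 (vg_verts L1) (vg_varord L1 x))
     = relabel_fun h2 (vg_verts L2) (\<lambda>x. rel_relabel h2 (vg_verts L2) (vg_varord L2 x))"
  "relabel_fun h1 (vg_verts L1) (\<lambda>x. rel_relabel h1 (vg_verts L1) (vg_clord L1 x))
     = relabel_fun h2 (vg_verts L2) (\<lambda>x. rel_relabel h2 (vg_verts L2) (vg_clord L2 x))"
  "relabel_fun h1 (vg_verts L1) (\<lambda>x. assign_relabel h1 (vg_verts L1) (Var L1 x) ` dl_rule L1 x)
     = relabel_fun h2 (vg_verts L2) (\<lambda>x. assign_relabel h2 (vg_verts L2) (Var L2 x) ` dl_rule L2 x)"
  "relabel_fun h1 (vg_verts L1) (dl_final L1) = relabel_fun h2 (vg_verts L2) (dl_final L2)"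
  "relabel_fun h1 (vg_verts L1) (dl_pi L1) = relabel_fun h2 (vg_verts L2) (dl_pi L2)"
  using graph_code_eq unfolding graph_code_def Let_def prod.inject by blast+

lemma forest_data_components:
  "map_prod h1 id ` dl_fverts L1 = map_prod h2 id ` dl_fverts L2"
  "fedge_relabel h1 ` dl_fedges L1 = fedge_relabel h2 ` dl_fedges L2"
  "restrict (\<lambda>(i, k). assign_relabel h1 (vg_verts L1) (Var L1 (inv_into (vg_verts L1) h1 i))
       (dl_prev L1 (inv_into (vg_verts L1) h1 i, k))) (map_prod h1 id ` dl_fverts L1)
   = restrict (\<lambda>(i, k). assign_relabel h2 (vg_verts L2) (Var L2 (inv_into (vg_verts L2) h2 i))
       (dl_prev L2 (inv_into (vg_verts L2) h2 i, k))) (map_prod h2 id ` dl_fverts L2)"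
  using forest_data_eq unfolding forest_data_def Let_def prod.inject by blast+

lemma edges_iff:
  "x \<in> vg_verts L1 \<Longrightarrow> y \<in> vg_verts L1 \<Longrightarrow> (x, y) \<in> vg_edges L1 \<longleftrightarrow> (matching x, matching y) \<in> vg_edges L2"
  by (rule rel_relabel_eqD[OF graph_code_components(1)])

lemma Var_matching: "x \<in> vg_verts L1 \<Longrightarrow> Var L2 (matching x) = matching ` Var L1 x"
  using Var_image_of_edge_iso[OF bij_matching] edges_iff
    pseudo_landscape_edges[OF pl1] pseudo_landscape_edges[OF pl2] by blast

lemma orders_iff:
  assumes "x \<in> vg_verts L1" "u \<in> vg_verts L1" "v \<in> vg_verts L1"
  shows "(u, v) \<in> vg_varord L1 x \<longleftrightarrow> (matching u, matching v) \<in> vg_varord L2 (matching x)"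
    and "(u, v) \<in> vg_clord L1 x \<longleftrightarrow> (matching u, matching v) \<in> vg_clord L2 (matching x)"
  using rel_relabel_eqD[OF relabel_fun_eqD[OF graph_code_components(2) assms(1), symmetric] assms(2,3)]
    rel_relabel_eqD[OF relabel_fun_eqD[OF graph_code_components(3) assms(1), symmetric] assms(2,3)]
  by simp_all

lemma rules_iff:
  assumes x: "x \<in> vg_verts L1"
    and \<sigma>: "\<sigma> \<in> assign b (Var L1 x)" and \<tau>: "\<tau> \<in> assign b (Var L2 (matching x))"
    and agree: "\<forall>v\<in>Var L1 x. \<tau> (matching v) = \<sigma> v"
  shows "\<sigma> \<in> dl_rule L1 x \<longleftrightarrow> \<tau> \<in> dl_rule L2 (matching x)"
  using relabelled_rules_eq_iff[OF _ pseudo_landscape_rule[OF pl1 x] _ Var_subset_verts[OF pl1] \<sigma> _ agree]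
    relabel_fun_eqD[OF graph_code_components(4) x] pseudo_landscape_rule[OF pl2 matching_in[OF x]] \<tau>
  unfolding Var_matching[OF x] by simp

lemma fverts_iff: "x \<in> vg_verts L1 \<Longrightarrow> (x, i) \<in> dl_fverts L1 \<longleftrightarrow> (matching x, i) \<in> dl_fverts L2"
  by (rule fverts_relabel_eqD[OF forest_data_components(1) pseudo_landscape_fverts[OF pl1] pseudo_landscape_fverts[OF pl2]])

lemma fedges_iff:
  "x \<in> vg_verts L1 \<Longrightarrow> y \<in> vg_verts L1 \<Longrightarrow>
     ((x, i), (y, j), l) \<in> dl_fedges L1 \<longleftrightarrow> ((matching x, i), (matching y, j), l) \<in> dl_fedges L2"
  by (rule fedges_relabel_eqD[OF forest_data_components(2) forest_edge_verts[OF pl1] forest_edge_verts[OF pl2]])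

lemma prev_eq:
  assumes u: "u \<in> dl_fverts L1" and v: "v \<in> Var L1 (fst u)"
  shows "dl_prev L2 (matching (fst u), snd u) (matching v) = dl_prev L1 u v"
proof -
  obtain x k where u_eq: "u = (x, k)" by (cases u)
  have x: "x \<in> vg_verts L1" using u u_eq pseudo_landscape_fverts[OF pl1] by blast
  have "(h1 x, k) \<in> map_prod h1 id ` dl_fverts L1" using u u_eq by force
  moreover from this have "(h1 x, k) \<in> map_prod h2 id ` dl_fverts L2"
    using forest_data_components(1) by simp
  ultimately have same: "assign_relabel h1 (vg_verts L1) (Var L1 x) (dl_prev L1 (x, k))
      = assign_relabel h2 (vg_verts L2) (Var L2 (matching x)) (dl_prev L2 (matching x, k))"
    using fun_cong[OF forest_data_components(3), of "(h1 x, k)"] inv_into_h1[OF x] inv_into_h2[OF x] by simp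
  have v': "v \<in> Var L1 x" and mv: "matching v \<in> Var L2 (matching x)"
    using v u_eq Var_matching[OF x] by simp_all
  have "dl_prev L1 (x, k) v = assign_relabel h1 (vg_verts L1) (Var L1 x) (dl_prev L1 (x, k)) (h1 v)"
    using assign_relabel_apply[OF inj1 Var_subset_verts[OF pl1] v', of "dl_prev L1 (x, k)"] by simp
  also have "\<dots> = dl_prev L2 (matching x, k) (matching v)"
    using same assign_relabel_apply[OF inj2 Var_subset_verts[OF pl2] mv, of "dl_prev L2 (matching x, k)"]
      h2_matching subsetD[OF Var_subset_verts[OF pl1] v'] by simp
  finally show ?thesis using u_eq by simp
qed

lemma is_iso_matching: "is_iso b matching L1 L2"
  unfolding is_iso_def
  using bij_matching edges_iff orders_iff rules_iff fverts_iff fedges_iff prev_eq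
    relabel_fun_eqD[OF graph_code_components(5)] relabel_fun_eqD[OF graph_code_components(6)]
  by simp

end

section \<open>Forests of grounded landscapes\<close>

lemma parent_unique:
  assumes L: "pseudo_landscape b L" and fin: "finite (dl_fverts L)"
    and e: "e \<in> dl_fedges L" "e' \<in> dl_fedges L" "fst (snd e) = fst (snd e')"
  shows "e = e'"
proof -
  define w where "w = fst (snd e)"
  let ?in = "{d \<in> dl_fedges L. fst (snd d) = w}"
  have "?in \<subseteq> (\<lambda>u. (u, w, rel_label L (fst u) (fst w))) ` dl_fverts L"
  proof
    fix d assume d: "d \<in> ?in"
    obtain u l where d_eq: "d = (u, w, l)" using d by (cases d) auto
    then have "u \<in> dl_fverts L" "l = rel_label L (fst u) (fst w)"
      using d forest_edgeD(1,5)[OF L, of u w l] by auto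
    then show "d \<in> (\<lambda>u. (u, w, rel_label L (fst u) (fst w))) ` dl_fverts L"
      using d_eq by blast
  qed
  then have "finite ?in" using fin finite_surj by blast
  moreover have "card ?in \<le> 1"
    using L forest_edgeD(2)[OF L, of "fst e" w "snd (snd e)"] e(1) unfolding pseudo_landscape_def w_def by simp
  ultimately show ?thesis using e card_le_Suc0_iff_eq unfolding w_def by fastforce
qed

lemma parent_exists:
  assumes L: "pseudo_landscape b L" and grounded: "grounded L" and fin: "finite (dl_fverts L)"
    and v: "v \<in> dl_fverts L" "0 < snd v"
  shows "\<exists>e\<in>dl_fedges L. fst (snd e) = v"
proof (rule ccontr)
  assume orphan: "\<not> (\<exists>e\<in>dl_fedges L. fst (snd e) = v)"
  let ?R = "forest_rel L"
  have edge_of: "\<exists>l. (y, z, l) \<in> dl_fedges L" if "(y, z) \<in> ?R" for y z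
    using that unfolding forest_rel_def by blast
  have above: "snd v \<le> snd w" if "(v, w) \<in> ?R\<^sup>*" for w
    using that by induction (use edge_of forest_edgeD(3)[OF L] in fastforce)+
  \<comment> \<open>A node has at most one parent and \<open>v\<close> has none, so its component consists of descendants.\<close>
  have descendant: "(v, w) \<in> ?R\<^sup>*" if "(v, w) \<in> (?R \<union> ?R\<inverse>)\<^sup>*" for w
    using that
  proof induction
    case (step y z)
    show ?case
    proof (cases "(y, z) \<in> ?R")
      case False
      then have "(z, y) \<in> ?R" using step.hyps(2) by blast
      then obtain l where zy: "(z, y, l) \<in> dl_fedges L" using edge_of by blast
      then have "y \<noteq> v" using orphan by force
      then obtain y' where y': "(v, y') \<in> ?R\<^sup>*" "(y', y) \<in> ?R" using step.IH by (metis rtranclE)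
      then obtain l' where "(y', y, l') \<in> dl_fedges L" using edge_of by blast
      then have "z = y'" using parent_unique[OF L fin zy] by fastforce
      then show ?thesis using y'(1) by simp
    qed (use step.IH in \<open>simp add: rtrancl_into_rtrancl\<close>)
  qed simp
  obtain w where "(v, w) \<in> (?R \<union> ?R\<inverse>)\<^sup>*" "snd w = 0"
    using grounded v(1) unfolding grounded_def by blast
  then show False using above descendant v(2) by fastforce
qed

context
  fixes b :: nat and L :: dland and h :: "nat \<Rightarrow> nat"
  assumes L: "pseudo_landscape b L" and bij: "bij_betw h (vg_verts L) {..<card (vg_verts L)}"
begin

lemma relabelled_forest_edge:
  assumes e: "(u, v, l) \<in> dl_fedges L"
  shows "(h (fst u), h (fst v)) \<in> rel_relabel h (vg_verts L) (relE L)"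
    and "l = label_table L h (h (fst u), h (fst v))"
proof -
  have inj: "inj_on h (vg_verts L)" using bij bij_betw_imp_inj_on by blast
  have x: "fst u \<in> vg_verts L" "fst v \<in> vg_verts L"
    using forest_edgeD(1,2)[OF L e] pseudo_landscape_fverts[OF L] by auto
  show "(h (fst u), h (fst v)) \<in> rel_relabel h (vg_verts L) (relE L)"
    using rel_relabel_iff[OF inj x] forest_edgeD(4)[OF L e] by simp
  show "l = label_table L h (h (fst u), h (fst v))"
    using forest_edgeD(5)[OF L e] x bij_betw_apply[OF bij] inj
    by (auto simp: label_table_def Let_def inv_into_f_f)
qed

lemma inj_on_fverts_relabel: "inj_on (map_prod h id) (dl_fverts L)"
  using map_prod_inj_on[OF bij_betw_imp_inj_on[OF bij] inj_on_id]
  by (rule inj_on_subset[OF _ pseudo_landscape_fverts[OF L]])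

lemma relabelled_parent_unique:
  assumes fin: "finite (dl_fverts L)"
    and d: "d \<in> fedge_relabel h ` dl_fedges L" and d': "d' \<in> fedge_relabel h ` dl_fedges L"
    and same_target: "fst (snd d) = fst (snd d')"
  shows "d = d'"
proof -
  obtain u v l where e: "(u, v, l) \<in> dl_fedges L" and d_eq: "d = (map_prod h id u, map_prod h id v, l)"
    using d by (rule fedge_relabelE)
  obtain u' v' l' where e': "(u', v', l') \<in> dl_fedges L"
    and d'_eq: "d' = (map_prod h id u', map_prod h id v', l')"
    using d' by (rule fedge_relabelE)
  have "v = v'"
    using inj_onD[OF inj_on_fverts_relabel _ forest_edgeD(2)[OF L e] forest_edgeD(2)[OF L e']]
      same_target d_eq d'_eq by simp
  then show ?thesis using parent_unique[OF L fin e e'] d_eq d'_eq by simp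
qed

lemma relabelled_parent_exists:
  assumes "grounded L" "finite (dl_fverts L)"
    and w: "w \<in> map_prod h id ` dl_fverts L" "0 < snd w"
  shows "\<exists>d\<in>fedge_relabel h ` dl_fedges L. fst (snd d) = w"
proof -
  from w(1) obtain v where v: "w = map_prod h id v" "v \<in> dl_fverts L" by (rule imageE)
  have "0 < snd v" using v(1) w(2) by simp
  then obtain e where e: "e \<in> dl_fedges L" "fst (snd e) = v"
    using parent_exists[OF L assms(1,2) v(2)] by blast
  obtain u l where "e = (u, v, l)" using e(2) by (metis prod_cases3 fst_conv snd_conv)
  then show ?thesis using e(1) v(1) by (force simp: fedge_relabel_apply)
qed

lemma forest_data_layered:
  assumes grounded: "grounded L" and fin: "finite (dl_fverts L)"
  shows "(map_prod h id ` dl_fverts L, fedge_relabel h ` dl_fedges L)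
           \<in> layered_forests (rel_relabel h (vg_verts L) (relE L)) (label_table L h)
                (card (vg_verts L)) (card (dl_fverts L))"
proof -
  have "h x < card (vg_verts L)" if "x \<in> vg_verts L" for x
    using bij_betw_apply[OF bij that] by simp
  then have roots: "fst ` map_prod h id ` dl_fverts L \<subseteq> {..<card (vg_verts L)}"
    using pseudo_landscape_fverts[OF L] by auto
  have edges: "u' \<in> map_prod h id ` dl_fverts L \<and> v' \<in> map_prod h id ` dl_fverts L \<and>
      snd v' = Suc (snd u') \<and> (fst u', fst v') \<in> rel_relabel h (vg_verts L) (relE L) \<and>
      l = label_table L h (fst u', fst v')"
    if d: "(u', v', l) \<in> fedge_relabel h ` dl_fedges L" for u' v' l
  proof -
    obtain u v l0 where e: "(u, v, l0) \<in> dl_fedges L"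
      and "(u', v', l) = (map_prod h id u, map_prod h id v, l0)"
      using d by (rule fedge_relabelE)
    then have uv: "u' = map_prod h id u" "v' = map_prod h id v" and e: "(u, v, l) \<in> dl_fedges L"
      by simp_all
    have "u' \<in> map_prod h id ` dl_fverts L" "v' \<in> map_prod h id ` dl_fverts L"
      unfolding uv using forest_edgeD(1,2)[OF L e] by simp_all
    then show ?thesis
      using forest_edgeD(3)[OF L e] relabelled_forest_edge[OF e] by (simp add: uv)
  qed
  show ?thesis
    unfolding layered_forests_def mem_Collect_eq case_prod_conv
  proof (intro conjI allI ballI impI)
    show "e = e'" if "e \<in> fedge_relabel h ` dl_fedges L" "e' \<in> fedge_relabel h ` dl_fedges L"
      "fst (snd e) = fst (snd e')" for e e'
      using relabelled_parent_unique[OF fin] that .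
    show "\<exists>e\<in>fedge_relabel h ` dl_fedges L. fst (snd e) = w"
      if "w \<in> map_prod h id ` dl_fverts L" "0 < snd w" for w
      using relabelled_parent_exists[OF grounded fin] that .
  qed (simp_all add: fin card_image[OF inj_on_fverts_relabel] roots edges)
qed

end

section \<open>Counting codes\<close>

definition assignments_below :: "nat \<Rightarrow> nat \<Rightarrow> (nat \<Rightarrow> nat) set" where
  "assignments_below b N = (\<Union>W\<in>Pow {..<N}. assign b W)"

definition graph_code_space :: "nat \<Rightarrow> nat \<Rightarrow> nat \<Rightarrow> graph_code set" where
  "graph_code_space b N p = (\<Union>n\<le>N. {n} \<times> Pow ({..<N} \<times> {..<N}) \<times>
     ({..<n} \<rightarrow>\<^sub>E Pow ({..<N} \<times> {..<N})) \<times> ({..<n} \<rightarrow>\<^sub>E Pow ({..<N} \<times> {..<N})) \<times>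
     ({..<n} \<rightarrow>\<^sub>E Pow (assignments_below b N)) \<times> ({..<n} \<rightarrow>\<^sub>E {..<b}) \<times> ({..<n} \<rightarrow>\<^sub>E {..<p}) \<times>
     Pow ({..<N} \<times> {..<N}) \<times> (({..<n} \<times> {..<n}) \<rightarrow>\<^sub>E {..N}) \<times> ({..<n} \<rightarrow>\<^sub>E Pow (assignments_below b N)))"

lemma finite_assign: "finite W \<Longrightarrow> finite (assign b W)"
  unfolding assign_def by (intro finite_PiE) auto

lemma finite_graph_code_space: "finite (graph_code_space b N p)"
proof -
  have "finite (assignments_below b N)"
    unfolding assignments_below_def by (intro finite_UN_I finite_assign) (auto intro: finite_subset)
  then show ?thesis
    unfolding graph_code_space_def
    by (intro finite_UN_I finite_cartesian_product finite_PiE finite_Pow_iff[THEN iffD2]) auto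
qed

definition compatible_forest_data :: "nat \<Rightarrow> graph_code \<Rightarrow> forest_data set" where
  "compatible_forest_data M c = (case c of (n, _, _, _, _, _, _, A, lab, RC) \<Rightarrow>
     {(F, E, P). (F, E) \<in> layered_forests A lab n M \<and> P \<in> (\<Pi>\<^sub>E u\<in>F. RC (fst u))})"

lemma card_image_le_if_factors:
  assumes fin: "finite (\<Phi> ` S)" and factors: "\<And>x y. x \<in> S \<Longrightarrow> y \<in> S \<Longrightarrow> \<Phi> x = \<Phi> y \<Longrightarrow> k x = k y"
  shows "finite (k ` S)" "card (k ` S) \<le> card (\<Phi> ` S)"
proof -
  have "k x = (k \<circ> inv_into S \<Phi>) (\<Phi> x)" if "x \<in> S" for x
    using factors[OF inv_into_into[of "\<Phi> x" \<Phi> S] that] f_inv_into_f[of "\<Phi> x" \<Phi> S] that by simp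
  then have "k ` S = (k \<circ> inv_into S \<Phi>) ` \<Phi> ` S" by (simp add: image_image cong: image_cong)
  then show "finite (k ` S)" "card (k ` S) \<le> card (\<Phi> ` S)"
    using fin card_image_le[OF fin] by simp_all
qed

lemma card_Sigma_le_mult:
  assumes "finite A" "\<And>a. a \<in> A \<Longrightarrow> finite (B a)" "\<And>a. a \<in> A \<Longrightarrow> card (B a) \<le> m"
  shows "finite (Sigma A B)" "card (Sigma A B) \<le> card A * m"
  using assms sum_bounded_above[of A "\<lambda>a. card (B a)" m] by auto

lemma card_forests_with_choices:
  assumes FS: "finite FS" and size: "\<And>F E. (F, E) \<in> FS \<Longrightarrow> finite F \<and> card F = M"
    and choices: "\<And>F E u. (F, E) \<in> FS \<Longrightarrow> u \<in> F \<Longrightarrow> finite (C u) \<and> card (C u) \<le> \<beta>"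
  shows "finite {(F, E, P). (F, E) \<in> FS \<and> P \<in> PiE F C}"
    and "card {(F, E, P). (F, E) \<in> FS \<and> P \<in> PiE F C} \<le> card FS * \<beta> ^ M"
proof -
  let ?T = "SIGMA fe:FS. PiE (fst fe) C"
  have eq: "{(F, E, P). (F, E) \<in> FS \<and> P \<in> PiE F C} = (\<lambda>((F, E), P). (F, E, P)) ` ?T" by force
  have "finite (PiE F C)" "card (PiE F C) \<le> \<beta> ^ M" if "(F, E) \<in> FS" for F E
  proof -
    show "finite (PiE F C)" using size[OF that] choices[OF that] by (intro finite_PiE) auto
    have "card (PiE F C) = (\<Prod>u\<in>F. card (C u))" using size[OF that] by (simp add: card_PiE)
    also have "\<dots> \<le> (\<Prod>u\<in>F. \<beta>)" using choices[OF that] by (intro prod_mono) auto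
    finally show "card (PiE F C) \<le> \<beta> ^ M" using size[OF that] by simp
  qed
  then have "finite ?T" "card ?T \<le> card FS * \<beta> ^ M"
    using card_Sigma_le_mult[of FS "\<lambda>fe. PiE (fst fe) C" "\<beta> ^ M", OF FS] by auto
  then show "finite {(F, E, P). (F, E) \<in> FS \<and> P \<in> PiE F C}"
    and "card {(F, E, P). (F, E) \<in> FS \<and> P \<in> PiE F C} \<le> card FS * \<beta> ^ M"
    unfolding eq using card_image_le le_trans by blast+
qed

context
  fixes b N :: nat and L :: dland and h :: "nat \<Rightarrow> nat"
  assumes L: "pseudo_landscape b L" and fin: "finite (vg_verts L)" and small: "card (vg_verts L) \<le> N"
    and bij: "bij_betw h (vg_verts L) {..<card (vg_verts L)}"
begin

lemma numbering_below: "x \<in> vg_verts L \<Longrightarrow> h x < N"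
  using bij_betw_apply[OF bij] small by fastforce

lemma rel_relabel_below: "rel_relabel h (vg_verts L) r \<subseteq> {..<N} \<times> {..<N}"
  using rel_relabel_subset numbering_below by blast

lemma relabel_fun_PiE: "(\<And>x. x \<in> vg_verts L \<Longrightarrow> g x \<in> B) \<Longrightarrow> relabel_fun h (vg_verts L) g \<in> {..<card (vg_verts L)} \<rightarrow>\<^sub>E B"
  using bij_betw_apply[OF bij_betw_inv_into[OF bij]] by (auto simp: relabel_fun_def)

lemma assign_relabel_below:
  assumes "\<sigma> \<in> assign b (Var L x)"
  shows "assign_relabel h (vg_verts L) (Var L x) \<sigma> \<in> assignments_below b N"
proof -
  have "assign_relabel h (vg_verts L) (Var L x) \<sigma> \<in> assign b (h ` Var L x)"
    using assign_relabel_in_assign[OF bij_betw_imp_inj_on[OF bij] Var_subset_verts[OF L] assms] .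
  moreover have "h ` Var L x \<subseteq> {..<N}" using numbering_below Var_subset_verts[OF L] by blast
  ultimately show ?thesis unfolding assignments_below_def by blast
qed

lemma label_table_PiE:
  "label_table L h \<in> ({..<card (vg_verts L)} \<times> {..<card (vg_verts L)}) \<rightarrow>\<^sub>E {..N}"
proof -
  have "rel_label L x y \<le> card (vg_verts L)" for x y
    unfolding rel_label_def relE_def by (rule card_mono[OF fin]) auto
  then have "rel_label L x y \<le> N" for x y using small le_trans by blast
  then show ?thesis by (auto simp: label_table_def Let_def)
qed

lemma graph_code_in_space:
  assumes dec: "decoration_ok b p L"
  shows "graph_code b L h \<in> graph_code_space b N p"
proof -
  have "x \<in> vg_verts L \<Longrightarrow> assign_relabel h (vg_verts L) (Var L x) ` dl_rule L x \<subseteq> assignments_below b N" for x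
    using assign_relabel_below pseudo_landscape_rule[OF L] by blast
  moreover have "assign_relabel h (vg_verts L) (Var L x) ` Rc b L x \<subseteq> assignments_below b N" for x
    using assign_relabel_below unfolding Rc_def by blast
  moreover have "dl_final L x < b" "dl_pi L x < p" if "x \<in> vg_verts L" for x
    using dec that unfolding decoration_ok_def assign_def by auto
  ultimately show ?thesis
    unfolding graph_code_def Let_def graph_code_space_def using small
    by (intro UN_I[of "card (vg_verts L)"])
      (simp_all add: rel_relabel_below label_table_PiE relabel_fun_PiE mem_Times_iff)
qed

lemma prev_data_PiE:
  assumes dec: "decoration_ok b p L"
  shows "restrict (\<lambda>(i, k). assign_relabel h (vg_verts L) (Var L (inv_into (vg_verts L) h i))
           (dl_prev L (inv_into (vg_verts L) h i, k))) (map_prod h id ` dl_fverts L)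
    \<in> (\<Pi>\<^sub>E u\<in>map_prod h id ` dl_fverts L.
         relabel_fun h (vg_verts L) (\<lambda>x. assign_relabel h (vg_verts L) (Var L x) ` Rc b L x) (fst u))"
proof (subst restrict_PiE_iff, intro ballI)
  fix u' assume "u' \<in> map_prod h id ` dl_fverts L"
  then obtain x k where u': "u' = (h x, k)" and xk: "(x, k) \<in> dl_fverts L" by auto
  have x: "x \<in> vg_verts L" using xk pseudo_landscape_fverts[OF L] by blast
  have "dl_prev L (x, k) \<in> Rc b L x" using dec xk unfolding decoration_ok_def by fastforce
  then show "(\<lambda>(i, k). assign_relabel h (vg_verts L) (Var L (inv_into (vg_verts L) h i))
           (dl_prev L (inv_into (vg_verts L) h i, k))) u'
    \<in> relabel_fun h (vg_verts L) (\<lambda>x. assign_relabel h (vg_verts L) (Var L x) ` Rc b L x) (fst u')"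
    using u' x bij_betw_apply[OF bij x] bij_betw_imp_inj_on[OF bij]
    by (simp add: relabel_fun_def inv_into_f_f)
qed

lemma forest_data_compatible:
  assumes "grounded L" "finite (dl_fverts L)" "decoration_ok b p L"
  shows "forest_data L h \<in> compatible_forest_data (card (dl_fverts L)) (graph_code b L h)"
  using forest_data_layered[OF L bij assms(1,2)] prev_data_PiE[OF assms(3)]
  unfolding compatible_forest_data_def graph_code_def forest_data_def Let_def by simp

lemma relabelled_Rel_outdegree:
  assumes deg: "\<forall>x\<in>vg_verts L. rel_deg L x \<le> \<Delta>"
  shows "bounded_outdegree (rel_relabel h (vg_verts L) (relE L)) (card (vg_verts L)) \<Delta>"
proof
  show "rel_relabel h (vg_verts L) (relE L) \<subseteq> {..<card (vg_verts L)} \<times> {..<card (vg_verts L)}"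
    using rel_relabel_subset bij_betw_apply[OF bij] by fastforce
  fix i
  show "card (rel_relabel h (vg_verts L) (relE L) `` {i}) \<le> \<Delta>"
  proof (cases "i \<in> h ` vg_verts L")
    case True
    then obtain x where x: "x \<in> vg_verts L" "i = h x" by blast
    have inj: "inj_on h (vg_verts L)" using bij bij_betw_imp_inj_on by blast
    have "rel_relabel h (vg_verts L) (relE L) `` {i} = h ` (relE L `` {x})"
      using x inj unfolding rel_relabel_def relE_def by (auto dest: inj_onD)
    moreover have "relE L `` {x} \<subseteq> vg_verts L" unfolding relE_def by blast
    then have "card (h ` (relE L `` {x})) = rel_deg L x"
      using card_image[OF inj_on_subset[OF inj]] unfolding rel_deg_def by (simp add: Image_singleton)
    ultimately show ?thesis using deg x by simp
  next
    case False
    then have "rel_relabel h (vg_verts L) (relE L) `` {i} = {}" unfolding rel_relabel_def by auto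
    then show ?thesis by simp
  qed
qed

lemma relabelled_Rc_choices:
  assumes rc: "\<forall>x\<in>vg_verts L. card (Rc b L x) \<le> \<beta>" and i: "i < card (vg_verts L)"
  defines "RC \<equiv> relabel_fun h (vg_verts L) (\<lambda>x. assign_relabel h (vg_verts L) (Var L x) ` Rc b L x)"
  shows "finite (RC i)" "card (RC i) \<le> \<beta>"
proof -
  define x where "x = inv_into (vg_verts L) h i"
  have x: "x \<in> vg_verts L" using bij_betw_apply[OF bij_betw_inv_into[OF bij]] i unfolding x_def by simp
  have RC: "RC i = assign_relabel h (vg_verts L) (Var L x) ` Rc b L x"
    using i unfolding RC_def relabel_fun_def x_def by simp
  have "finite (Rc b L x)"
    unfolding Rc_def using finite_assign finite_subset[OF Var_subset_verts[OF L] fin] by blast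
  then show "finite (RC i)" "card (RC i) \<le> \<beta>"
    unfolding RC using card_image_le rc x le_trans by blast+
qed

lemma card_compatible_forest_data:
  assumes deg: "\<forall>x\<in>vg_verts L. rel_deg L x \<le> \<Delta>" and rc: "\<forall>x\<in>vg_verts L. card (Rc b L x) \<le> \<beta>"
  shows "finite (compatible_forest_data M (graph_code b L h))"
    and "card (compatible_forest_data M (graph_code b L h)) \<le> 2 ^ N * (\<Sum>k\<le>M. (\<Delta> * M) choose k) * \<beta> ^ M"
proof -
  let ?A = "rel_relabel h (vg_verts L) (relE L)" and ?n = "card (vg_verts L)"
  let ?RC = "relabel_fun h (vg_verts L) (\<lambda>x. assign_relabel h (vg_verts L) (Var L x) ` Rc b L x)"
  let ?FS = "layered_forests ?A (label_table L h) ?n M"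
  interpret bounded_outdegree ?A ?n \<Delta> by (rule relabelled_Rel_outdegree[OF deg])
  have eq: "compatible_forest_data M (graph_code b L h) = {(F, E, P). (F, E) \<in> ?FS \<and> P \<in> PiE F (\<lambda>u. ?RC (fst u))}"
    by (simp add: compatible_forest_data_def graph_code_def Let_def)
  have choices: "finite (?RC (fst u)) \<and> card (?RC (fst u)) \<le> \<beta>" if "(F, E) \<in> ?FS" "u \<in> F" for F E u
    using relabelled_Rc_choices[OF rc] layered_forestsD(3)[OF that(1)] that(2) by blast
  have size: "finite F \<and> card F = M" if "(F, E) \<in> ?FS" for F E
    using layered_forestsD(1,2)[OF that] by simp
  note bound = card_forests_with_choices[OF card_layered_forests(1) size choices]
  show "finite (compatible_forest_data M (graph_code b L h))"
    unfolding eq by (rule bound(1))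
  have "card (compatible_forest_data M (graph_code b L h)) \<le> card ?FS * \<beta> ^ M"
    unfolding eq by (rule bound(2))
  also have "\<dots> \<le> 2 ^ ?n * (\<Sum>k\<le>M. (\<Delta> * M) choose k) * \<beta> ^ M"
    using card_layered_forests(2) by simp
  also have "\<dots> \<le> 2 ^ N * (\<Sum>k\<le>M. (\<Delta> * M) choose k) * \<beta> ^ M"
    using small by (intro mult_le_mono1 power_increasing) simp_all
  finally show "card (compatible_forest_data M (graph_code b L h)) \<le> 2 ^ N * (\<Sum>k\<le>M. (\<Delta> * M) choose k) * \<beta> ^ M" .
qed

end

section \<open>Counting isomorphism classes\<close>

definition landscape_code :: "nat \<Rightarrow> dland \<Rightarrow> graph_code \<times> forest_data" where
  "landscape_code b L = (graph_code b L (numbering L), forest_data L (numbering L))"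

lemma grounded_dl_setD:
  assumes "L \<in> grounded_dl_set b D \<Delta> \<beta> N1 N2 p"
  shows "pseudo_landscape b L" "grounded L" "finite (vg_verts L)" "card (vg_verts L) \<le> N1"
    "finite (dl_fverts L)" "card (dl_fverts L) = N2" "decoration_ok b p L"
    "\<forall>x\<in>vg_verts L. rel_deg L x \<le> \<Delta>" "\<forall>x\<in>vg_verts L. card (Rc b L x) \<le> \<beta>"
  using assms unfolding grounded_dl_set_def landscape_def of_type_def by auto

lemma grounded_dl_set_empty:
  assumes "N2 \<ge> 1"
  shows "grounded_dl_set b D \<Delta> \<beta> 0 N2 p = {}"
proof (rule equals0I)
  fix L assume L: "L \<in> grounded_dl_set b D \<Delta> \<beta> 0 N2 p"
  then have "vg_verts L = {}" using grounded_dl_setD(3,4)[OF L] by simp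
  then have "dl_fverts L = {}" using pseudo_landscape_fverts[OF grounded_dl_setD(1)[OF L]] by blast
  then show False using grounded_dl_setD(6)[OF L] assms by simp
qed

lemma equal_landscape_codes_imp_iso:
  assumes L1: "pseudo_landscape b L1" "finite (vg_verts L1)"
    and L2: "pseudo_landscape b L2" "finite (vg_verts L2)"
    and code: "landscape_code b L1 = landscape_code b L2"
  shows "\<exists>f. is_iso b f L1 L2"
proof -
  have codes: "graph_code b L1 (numbering L1) = graph_code b L2 (numbering L2)"
    "forest_data L1 (numbering L1) = forest_data L2 (numbering L2)"
    using code by (simp_all add: landscape_code_def)
  moreover from codes(1) have "card (vg_verts L1) = card (vg_verts L2)"
    by (simp add: graph_code_def Let_def)
  ultimately interpret equal_codes L1 L2 "numbering L1" "numbering L2" b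
    using numbering_bij[OF L1(2)] numbering_bij[OF L2(2)] L1(1) L2(1) by unfold_locales
  show ?thesis using is_iso_matching by blast
qed

lemma iso_classes_eq_if_equal_codes:
  assumes S: "\<forall>L\<in>S. pseudo_landscape b L \<and> finite (vg_verts L)"
    and L: "L1 \<in> S" "L2 \<in> S" and code: "landscape_code b L1 = landscape_code b L2"
  shows "iso_rel b S `` {L1} = iso_rel b S `` {L2}"
proof -
  have transfer: "L \<in> iso_rel b S `` {L2}"
    if L: "L \<in> iso_rel b S `` {L1}" and L1: "L1 \<in> S" and L2: "L2 \<in> S"
      and code: "landscape_code b L1 = landscape_code b L2" for L1 L2 L
  proof -
    obtain f where f: "is_iso b f L1 L" and "L \<in> S" using L unfolding iso_rel_def by blast
    have "pseudo_landscape b L1" "finite (vg_verts L1)" "pseudo_landscape b L2" "finite (vg_verts L2)"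
      using S L1 L2 by blast+
    then obtain g where "is_iso b g L2 L1" using equal_landscape_codes_imp_iso code[symmetric] by blast
    then have "is_iso b (f \<circ> g) L2 L"
      by (rule is_iso_comp[OF _ f \<open>pseudo_landscape b L2\<close> \<open>pseudo_landscape b L1\<close>])
    then show ?thesis using \<open>L \<in> S\<close> L2 unfolding iso_rel_def by blast
  qed
  show ?thesis
    using transfer[OF _ L code] transfer[OF _ L(2,1) code[symmetric]] by blast
qed

lemma card_landscape_codes:
  fixes b D \<Delta> \<beta> N1 N2 p :: nat
  defines "S \<equiv> grounded_dl_set b D \<Delta> \<beta> N1 N2 p"
    and "M \<equiv> 2 ^ N1 * (\<Sum>k\<le>N2. (\<Delta> * N2) choose k) * \<beta> ^ N2"
  shows "finite (landscape_code b ` S)" "card (landscape_code b ` S) \<le> card (graph_code_space b N1 p) * M"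
proof -
  let ?G = "(\<lambda>L. graph_code b L (numbering L)) ` S"
  note props = grounded_dl_setD[of _ b D \<Delta> \<beta> N1 N2 p, folded S_def]
  note numbered = numbering_bij[OF props(3)]
  have "?G \<subseteq> graph_code_space b N1 p"
    using graph_code_in_space[OF props(1,3,4) numbered props(7)] by blast
  then have G: "finite ?G" "card ?G \<le> card (graph_code_space b N1 p)"
    using finite_subset[OF _ finite_graph_code_space] card_mono[OF finite_graph_code_space] by simp_all
  have fibres: "finite (compatible_forest_data N2 g)" "card (compatible_forest_data N2 g) \<le> M"
    if "g \<in> ?G" for g
    using that card_compatible_forest_data[OF props(1,3,4) numbered props(8,9)] unfolding M_def by auto
  note Sigma = card_Sigma_le_mult[of ?G "compatible_forest_data N2" M, OF G(1) fibres]
  have sub: "landscape_code b ` S \<subseteq> Sigma ?G (compatible_forest_data N2)"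
    using forest_data_compatible[OF props(1,3,4) numbered props(2,5,7)] props(6)
    by (auto simp: landscape_code_def)
  show "finite (landscape_code b ` S)" using finite_subset[OF sub Sigma(1)] .
  have "card (landscape_code b ` S) \<le> card ?G * M" using card_mono[OF Sigma(1) sub] Sigma(2) by simp
  also have "\<dots> \<le> card (graph_code_space b N1 p) * M" using G(2) by simp
  finally show "card (landscape_code b ` S) \<le> card (graph_code_space b N1 p) * M" .
qed

lemma count_iso_classes:
  fixes b D \<Delta> \<beta> N1 N2 p :: nat
  defines "S \<equiv> grounded_dl_set b D \<Delta> \<beta> N1 N2 p"
  shows "finite (S // iso_rel b S)"
    and "card (S // iso_rel b S)
           \<le> card (graph_code_space b N1 p) * (2 ^ N1 * (\<Sum>k\<le>N2. (\<Delta> * N2) choose k) * \<beta> ^ N2)"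
proof -
  note codes = card_landscape_codes[of b D \<Delta> \<beta> N1 N2 p, folded S_def]
  have "\<forall>L\<in>S. pseudo_landscape b L \<and> finite (vg_verts L)"
    using grounded_dl_setD(1,3) unfolding S_def by blast
  note classes = card_image_le_if_factors[OF codes(1) iso_classes_eq_if_equal_codes[OF this]]
  have quotient: "S // iso_rel b S = (\<lambda>L. iso_rel b S `` {L}) ` S" unfolding quotient_def by blast
  show "finite (S // iso_rel b S)" unfolding quotient by (rule classes(1))
  show "card (S // iso_rel b S)
      \<le> card (graph_code_space b N1 p) * (2 ^ N1 * (\<Sum>k\<le>N2. (\<Delta> * N2) choose k) * \<beta> ^ N2)"
    unfolding quotient using classes(2) codes(2) by (rule le_trans)
qed

lemma count_bound_le_closed_form:
  fixes c \<Delta> \<beta> N1 N2 :: nat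
  assumes "\<Delta> \<ge> 2" "N1 \<ge> 1" "N2 \<ge> 1"
  defines "K \<equiv> real \<Delta> ^ \<Delta> / real (\<Delta> - 1) ^ (\<Delta> - 1)"
  shows "real (c * (2 ^ N1 * (\<Sum>k\<le>N2. (\<Delta> * N2) choose k) * \<beta> ^ N2))
           \<le> real c * 2 ^ N1 * 2 * real N2 ^ N1 * (K * real \<beta>) ^ N2"
proof -
  have "real N2 \<le> real N2 ^ N1" "1 \<le> real N2" using assms(2,3) by (simp_all add: self_le_power)
  then have "real (N2 + 1) \<le> 2 * real N2 ^ N1" unfolding of_nat_add of_nat_1 by linarith
  have "real (c * (2 ^ N1 * (\<Sum>k\<le>N2. (\<Delta> * N2) choose k) * \<beta> ^ N2))
      = real c * 2 ^ N1 * real (\<Sum>k\<le>N2. (\<Delta> * N2) choose k) * real \<beta> ^ N2"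
    by simp
  also have "\<dots> \<le> real c * 2 ^ N1 * (real (N2 + 1) * K ^ N2) * real \<beta> ^ N2"
    using sum_choose_mult_le_entropy_power[OF assms(1), of N2] unfolding K_def
    by (intro mult_left_mono mult_right_mono) simp_all
  also have "\<dots> \<le> real c * 2 ^ N1 * (2 * real N2 ^ N1 * K ^ N2) * real \<beta> ^ N2"
    using \<open>real (N2 + 1) \<le> 2 * real N2 ^ N1\<close> unfolding K_def
    by (intro mult_left_mono mult_right_mono) simp_all
  also have "\<dots> = real c * 2 ^ N1 * 2 * real N2 ^ N1 * (K * real \<beta>) ^ N2"
    by (simp add: power_mult_distrib)
  finally show ?thesis .
qed

theorem lemma3p5:
  fixes b D \<Delta> N1 p :: nat
  assumes "b \<ge> 2" and "\<Delta> \<ge> 2"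
  shows "\<exists>C::real. \<forall>\<beta> N2 :: nat. N2 \<ge> 1 \<longrightarrow>
           (let S = grounded_dl_set b D \<Delta> \<beta> N1 N2 p in
            finite (S // iso_rel b S) \<and>
            real (card (S // iso_rel b S)) \<le>
              C * real N2 ^ N1 * (real \<Delta> ^ \<Delta> / real (\<Delta> - 1) ^ (\<Delta> - 1) * real \<beta>) ^ N2)"
proof (intro exI allI impI)
  fix \<beta> N2 :: nat assume N2: "N2 \<ge> 1"
  define S where "S = grounded_dl_set b D \<Delta> \<beta> N1 N2 p"
  let ?C = "real (card (graph_code_space b N1 p)) * 2 ^ N1 * 2"
  let ?bound = "?C * real N2 ^ N1 * (real \<Delta> ^ \<Delta> / real (\<Delta> - 1) ^ (\<Delta> - 1) * real \<beta>) ^ N2"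
  have "real (card (S // iso_rel b S)) \<le> ?bound"
  proof (cases "N1 = 0")
    case True
    then show ?thesis using grounded_dl_set_empty[OF N2] unfolding S_def by simp
  next
    case False
    then have "N1 \<ge> 1" by simp
    from count_iso_classes(2)[of b D \<Delta> \<beta> N1 N2 p] show ?thesis
      unfolding S_def
      by (rule order_trans[OF of_nat_mono count_bound_le_closed_form[OF assms(2) \<open>N1 \<ge> 1\<close> N2]])
  qed
  then show "let S = grounded_dl_set b D \<Delta> \<beta> N1 N2 p in finite (S // iso_rel b S) \<and> real (card (S // iso_rel b S)) \<le> ?bound"
    using count_iso_classes(1) unfolding S_def Let_def by blast
qed

end
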